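(* Let $(X,d)$ be a u.l.f. metric space, $h\colon X\to\mathbb{R}$ coarse, $\beta\in\mathbb{R}$, and $\varphi$ a $(\sigma_h,\beta)$-KMS state on $\mathrm{C}^*_u(X)$. Define $\psi$ on $\mathrm{C}^*_u(X)$ by $$\psi(a)=\lim_{F,\mathcal{F}}\sum_{x\in F}a_{x,x}\varphi(e_{x,x}),\qquad a=[a_{x,y}]\in\mathrm{C}^*_u(X),$$ where $\mathcal{F}$ is the net of finite subsets of $X$ ordered by inclusion. Then $\psi$ is a well-defined positive functional, and: (1) $\psi$ is strongly continuous and satisfies the $(\sigma_h,\beta)$-KMS condition; (2) $\varphi-\psi$ is a positive functional which satisfies the $(\sigma_h,\beta)$-KMS condition and vanishes on $\mathcal{K}(\ell_2(X))$.
   Context: A metric space is u.l.f. if for every $r>0$ the cardinalities of its balls of radius $r$ are uniformly bounded. $a_{x,y}=\langle a\delta_y,\delta_x\rangle$ and $\mathrm{C}^*_u(X)$ is the norm closure of the $^*$-algebra of operators $a$ with $\sup\{d(x,y):a_{x,y}\neq0\}<\infty$. $e_{x,x}$ is the rank-one projection onto $\mathbb{C}\delta_x$. $h$ is coarse if for each $r>0$ there is $s>0$ with $d(x,y)<r\Rightarrow|h(x)-h(y)|<s$. $\sigma_{h,t}(a)=e^{it\bar h}ae^{-it\bar h}$, $e^{it\bar h}\delta_x=e^{ith(x)}\delta_x$. A functional $\varphi$ satisfies the $(\sigma_h,\beta)$-KMS condition if $\varphi(a\sigma_{h,i\beta}(b))=\varphi(ba)$ for all $a$ and all analytic $b$ (those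 for which $t\mapsto\sigma_{h,t}(b)$ extends to an entire function); a KMS state is a state satisfying it. Strongly continuous means continuous on bounded sets with respect to the strong operator topology. *)

theory Defs
  imports "HOL-Analysis.Analysis"
begin

text \<open>Matrices indexed by the points of X represent operators on ell_2(X):
  a x y is the entry a_{x,y} = <a delta_y, delta_x>.\<close>

type_synonym 'x mat = "'x \<Rightarrow> 'x \<Rightarrow> complex"

definition l2 :: "('x \<Rightarrow> complex) set" where
  "l2 = {v. (\<lambda>x. (cmod (v x))\<^sup>2) summable_on UNIV}"

definition l2norm :: "('x \<Rightarrow> complex) \<Rightarrow> real" where
  "l2norm v = sqrt (infsum (\<lambda>x. (cmod (v x))\<^sup>2) UNIV)"

definition l2inner :: "('x \<Rightarrow> complex) \<Rightarrow> ('x \<Rightarrow> complex) \<Rightarrow> complex" where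
  "l2inner u v = infsum (\<lambda>x. u x * cnj (v x)) UNIV"

definition mapply :: "'x mat \<Rightarrow> ('x \<Rightarrow> complex) \<Rightarrow> ('x \<Rightarrow> complex)" where
  "mapply a v = (\<lambda>x. infsum (\<lambda>y. a x y * v y) UNIV)"

definition vdiff :: "('x \<Rightarrow> complex) \<Rightarrow> ('x \<Rightarrow> complex) \<Rightarrow> ('x \<Rightarrow> complex)" where
  "vdiff u v = (\<lambda>x. u x - v x)"

definition bounded_op :: "'x mat \<Rightarrow> bool" where
  "bounded_op a \<longleftrightarrow>
     (\<forall>v\<in>l2. \<forall>x. (\<lambda>y. a x y * v y) summable_on UNIV) \<and>
     (\<exists>C. \<forall>v\<in>l2. mapply a v \<in> l2 \<and> l2norm (mapply a v) \<le> C * l2norm v)"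

definition opnorm :: "'x mat \<Rightarrow> real" where
  "opnorm a = Sup {l2norm (mapply a v) | v. v \<in> l2 \<and> l2norm v \<le> 1}"

definition madd :: "'x mat \<Rightarrow> 'x mat \<Rightarrow> 'x mat" where
  "madd a b = (\<lambda>x y. a x y + b x y)"

definition msub :: "'x mat \<Rightarrow> 'x mat \<Rightarrow> 'x mat" where
  "msub a b = (\<lambda>x y. a x y - b x y)"

definition mscale :: "complex \<Rightarrow> 'x mat \<Rightarrow> 'x mat" where
  "mscale c a = (\<lambda>x y. c * a x y)"

definition mmult :: "'x mat \<Rightarrow> 'x mat \<Rightarrow> 'x mat" where
  "mmult a b = (\<lambda>x z. infsum (\<lambda>y. a x y * b y z) UNIV)"

definition ematrix :: "'x \<Rightarrow> 'x mat" where
  "ematrix x = (\<lambda>u v. if u = x \<and> v = x then 1 else 0)"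

definition ulf :: "'x::metric_space itself \<Rightarrow> bool" where
  "ulf _ \<longleftrightarrow> (\<forall>r>0. \<exists>N::nat. \<forall>x::'x. finite (ball x r) \<and> card (ball x r) \<le> N)"

definition coarse_fun :: "('x::metric_space \<Rightarrow> real) \<Rightarrow> bool" where
  "coarse_fun h \<longleftrightarrow> (\<forall>r>0. \<exists>s>0. \<forall>x y. dist x y < r \<longrightarrow> \<bar>h x - h y\<bar> < s)"

definition finite_prop :: "'x::metric_space mat \<Rightarrow> bool" where
  "finite_prop a \<longleftrightarrow> (\<exists>r. \<forall>x y. a x y \<noteq> 0 \<longrightarrow> dist x y \<le> r)"

definition uroe :: "'x::metric_space mat set" where
  "uroe = {a. bounded_op a \<and>
     (\<forall>\<epsilon>>0. \<exists>b. bounded_op b \<and> finite_prop b \<and> opnorm (msub a b) < \<epsilon>)}"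

definition pos_op :: "'x mat \<Rightarrow> bool" where
  "pos_op a \<longleftrightarrow> bounded_op a \<and>
     (\<forall>v\<in>l2. Im (l2inner (mapply a v) v) = 0 \<and> Re (l2inner (mapply a v) v) \<ge> 0)"

definition lin_functional :: "'x mat set \<Rightarrow> ('x mat \<Rightarrow> complex) \<Rightarrow> bool" where
  "lin_functional A \<phi> \<longleftrightarrow>
     (\<forall>a\<in>A. \<forall>b\<in>A. \<phi> (madd a b) = \<phi> a + \<phi> b) \<and>
     (\<forall>c. \<forall>a\<in>A. \<phi> (mscale c a) = c * \<phi> a)"

definition pos_functional :: "'x mat set \<Rightarrow> ('x mat \<Rightarrow> complex) \<Rightarrow> bool" where
  "pos_functional A \<phi> \<longleftrightarrow> lin_functional A \<phi> \<and>
     (\<forall>a\<in>A. pos_op a \<longrightarrow> Im (\<phi> a) = 0 \<and> Re (\<phi> a) \<ge> 0)"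

definition functional_norm :: "'x mat set \<Rightarrow> ('x mat \<Rightarrow> complex) \<Rightarrow> real" where
  "functional_norm A \<phi> = Sup {cmod (\<phi> a) | a. a \<in> A \<and> opnorm a \<le> 1}"

definition is_state :: "'x mat set \<Rightarrow> ('x mat \<Rightarrow> complex) \<Rightarrow> bool" where
  "is_state A \<phi> \<longleftrightarrow> pos_functional A \<phi> \<and> functional_norm A \<phi> = 1"

text \<open>sigma_{h,t}(a) = e^{i t h} a e^{-i t h}, t real.\<close>
definition sigma :: "('x \<Rightarrow> real) \<Rightarrow> real \<Rightarrow> 'x mat \<Rightarrow> 'x mat" where
  "sigma h t a = (\<lambda>x y. exp (\<i> * of_real t * of_real (h x)) * a x y * exp (- \<i> * of_real t * of_real (h y)))"

definition entire_op :: "(complex \<Rightarrow> 'x mat) \<Rightarrow> bool" where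
  "entire_op F \<longleftrightarrow> (\<forall>z. \<exists>D. bounded_op D \<and>
     ((\<lambda>w. opnorm (msub (mscale (1 / (w - z)) (msub (F w) (F z))) D)) \<longlongrightarrow> 0) (at z))"

text \<open>F is an entire extension (within A) of t |-> sigma_{h,t}(b); b is analytic iff such F exists,
  and then sigma_{h,z}(b) = F z.\<close>
definition analytic_ext :: "'x mat set \<Rightarrow> ('x \<Rightarrow> real) \<Rightarrow> 'x mat \<Rightarrow> (complex \<Rightarrow> 'x mat) \<Rightarrow> bool" where
  "analytic_ext A h b F \<longleftrightarrow> (\<forall>z. F z \<in> A) \<and> entire_op F \<and>
     (\<forall>t::real. F (of_real t) = sigma h t b)"

definition kms_condition :: "'x mat set \<Rightarrow> ('x \<Rightarrow> real) \<Rightarrow> real \<Rightarrow> ('x mat \<Rightarrow> complex) \<Rightarrow> bool" where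
  "kms_condition A h \<beta> \<phi> \<longleftrightarrow>
     (\<forall>a\<in>A. \<forall>b\<in>A. \<forall>F. analytic_ext A h b F \<longrightarrow>
        \<phi> (mmult a (F (\<i> * of_real \<beta>))) = \<phi> (mmult b a))"

text \<open>Strong continuity: continuity on each norm-bounded subset of A w.r.t. the strong
  operator topology (convergence of filters/nets).\<close>
definition strongly_continuous :: "'x mat set \<Rightarrow> ('x mat \<Rightarrow> complex) \<Rightarrow> bool" where
  "strongly_continuous A \<phi> \<longleftrightarrow>
     (\<forall>R. \<forall>a\<in>A. opnorm a \<le> R \<longrightarrow>
       (\<forall>F :: 'x mat filter.
          eventually (\<lambda>b. b \<in> A \<and> opnorm b \<le> R) F \<longrightarrow>
          (\<forall>v\<in>l2. ((\<lambda>b. l2norm (vdiff (mapply b v) (mapply a v))) \<longlongrightarrow> 0) F) \<longrightarrow>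
          (\<phi> \<longlongrightarrow> \<phi> a) F))"

definition compact_op :: "'x mat \<Rightarrow> bool" where
  "compact_op a \<longleftrightarrow> bounded_op a \<and>
     (\<forall>v :: nat \<Rightarrow> ('x \<Rightarrow> complex). (\<forall>n. v n \<in> l2 \<and> l2norm (v n) \<le> 1) \<longrightarrow>
        (\<exists>r w. strict_mono r \<and> w \<in> l2 \<and>
           (\<lambda>n. l2norm (vdiff (mapply a (v (r n))) w)) \<longlonglongrightarrow> 0))"

end

theory Submission
  imports Defs "HOL-Complex_Analysis.Complex_Analysis"
begin

(* For a finite set S let p be the projection onto the span of the delta_x, x in S, and
   q = 1 - p. Diagonal operators are fixed by sigma, so the KMS condition lets them be moved
   cyclically under phi: phi(q a p) = phi(p q a) = 0 and phi(e_xx a) = a_xx phi(e_xx). Hence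
     phi(a) = (sum over x in S of a_xx phi(e_xx)) + phi(q a q).
   As the weights phi(e_xx) are nonnegative with total mass at most phi(1), the sums converge
   absolutely to psi(a), and phi - psi is the limit of the positive functionals a |-> phi(q a q).
   For compact a and S running through the (finite, by uniform local finiteness) balls about a
   point, the norms of q a tend to 0, so phi - psi vanishes on compact operators. Applying the
   KMS condition to matrix units gives phi(e_yy) = exp(-beta (h y - h x)) phi(e_xx); with the
   entries of an analytic extension determined by the identity theorem, interchanging the
   double sum yields the KMS condition for psi. Strong continuity of psi is dominated
   convergence for the weighted diagonal sum. *)

section \<open>Square-summable functions\<close>

lemma infsum_finite_support:
  assumes "finite T" "\<And>x. x \<notin> T \<Longrightarrow> f x = 0"
  shows "infsum f UNIV = (sum f T :: 'b::{topological_comm_monoid_add, t2_space})"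
proof -
  have "infsum f UNIV = infsum f T" by (rule infsum_cong_neutral) (use assms in auto)
  then show ?thesis using assms by simp
qed

lemma summable_on_finite_support:
  assumes "finite T" "\<And>x. x \<notin> T \<Longrightarrow> f x = 0"
  shows "(f :: _ \<Rightarrow> 'b::{topological_comm_monoid_add}) summable_on UNIV"
  by (rule summable_on_cong_neutral[THEN iffD1, of _ T]) (use assms in auto)

lemma infsum_diff:
  fixes f g :: "'a \<Rightarrow> 'b::{topological_ab_group_add, t2_space}"
  assumes "f summable_on A" "g summable_on A"
  shows "infsum (\<lambda>x. f x - g x) A = infsum f A - infsum g A"
proof -
  have "(\<lambda>x. - g x) summable_on A" using assms(2) by (simp add: summable_on_uminus)
  then show ?thesis using infsum_add[OF assms(1), of "\<lambda>x. - g x"] infsum_uminus[of g A] by simp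
qed

lemma infsum_of_real: "infsum (\<lambda>x. complex_of_real (f x)) A = complex_of_real (infsum f A)"
proof (cases "f summable_on A")
  case True
  then show ?thesis by (intro infsumI has_sum_of_real) simp
next
  case False
  then have "\<not> (\<lambda>x. complex_of_real (f x)) summable_on A"
    using summable_on_Re[of "\<lambda>x. complex_of_real (f x)" A] by auto
  then show ?thesis using False by (simp add: infsum_not_exists)
qed

lemma l2norm_nonneg: "l2norm v \<ge> 0"
  by (simp add: l2norm_def Infinite_Sum.infsum_nonneg)

lemma l2norm_power2: "(l2norm v)\<^sup>2 = infsum (\<lambda>x. (cmod (v x))\<^sup>2) UNIV"
  by (simp add: l2norm_def Infinite_Sum.infsum_nonneg)

lemma L2_set_le_l2norm:
  assumes "v \<in> l2"
  shows "L2_set (\<lambda>x. cmod (v x)) T \<le> l2norm v"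
proof (cases "finite T")
  case True
  have "(\<Sum>x\<in>T. (cmod (v x))\<^sup>2) \<le> infsum (\<lambda>x. (cmod (v x))\<^sup>2) UNIV"
    by (rule finite_sum_le_infsum) (use assms True in \<open>auto simp: l2_def\<close>)
  then show ?thesis unfolding L2_set_def l2norm_def by (rule real_sqrt_le_mono)
qed (simp add: l2norm_nonneg)

lemma L2_set_bounded_imp_l2:
  assumes "\<And>T. finite T \<Longrightarrow> L2_set (\<lambda>x. cmod (u x)) T \<le> K"
  shows "u \<in> l2" and "l2norm u \<le> K"
proof -
  have K: "K \<ge> 0" using assms[of "{}"] by simp
  have sums: "(\<Sum>x\<in>T. (cmod (u x))\<^sup>2) \<le> K\<^sup>2" if "finite T" for T
    using sqrt_le_D[OF assms[OF that, unfolded L2_set_def]] .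
  show l2: "u \<in> l2"
    unfolding l2_def by (auto intro!: nonneg_bdd_above_summable_on intro: sums)
  have "infsum (\<lambda>x. (cmod (u x))\<^sup>2) UNIV \<le> K\<^sup>2"
    by (rule infsum_le_finite_sums) (use l2 sums in \<open>auto simp: l2_def\<close>)
  then show "l2norm u \<le> K" unfolding l2norm_def using K by (simp add: real_le_lsqrt)
qed

lemma norm_le_l2norm: "v \<in> l2 \<Longrightarrow> cmod (v x) \<le> l2norm v"
  using L2_set_le_l2norm[of v "{x}"] by simp

lemma l2norm_eq_0_imp: "v \<in> l2 \<Longrightarrow> l2norm v = 0 \<Longrightarrow> v x = 0"
  using norm_le_l2norm[of v x] by simp

lemma l2_dominated:
  assumes "v \<in> l2" "\<And>x. cmod (u x) \<le> cmod (v x)"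
  shows "u \<in> l2" and "l2norm u \<le> l2norm v"
proof -
  have "L2_set (\<lambda>x. cmod (u x)) T \<le> l2norm v" for T
    using L2_set_mono[of T "\<lambda>x. cmod (u x)" "\<lambda>x. cmod (v x)"] L2_set_le_l2norm[OF assms(1), of T]
      assms(2) by force
  then show "u \<in> l2" and "l2norm u \<le> l2norm v" by (auto intro: L2_set_bounded_imp_l2)
qed

lemma l2_triangle:
  assumes "u \<in> l2" "v \<in> l2" "\<And>x. cmod (w x) \<le> cmod (u x) + cmod (v x)"
  shows "w \<in> l2" and "l2norm w \<le> l2norm u + l2norm v"
proof -
  have "L2_set (\<lambda>x. cmod (w x)) T \<le> l2norm u + l2norm v" for T
  proof -
    have "L2_set (\<lambda>x. cmod (w x)) T \<le> L2_set (\<lambda>x. cmod (u x) + cmod (v x)) T"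
      by (rule L2_set_mono) (use assms(3) in auto)
    also have "\<dots> \<le> L2_set (\<lambda>x. cmod (u x)) T + L2_set (\<lambda>x. cmod (v x)) T"
      by (rule L2_set_triangle_ineq)
    also have "\<dots> \<le> l2norm u + l2norm v"
      using assms(1,2) by (intro add_mono L2_set_le_l2norm)
    finally show ?thesis .
  qed
  then show "w \<in> l2" and "l2norm w \<le> l2norm u + l2norm v" by (auto intro: L2_set_bounded_imp_l2)
qed

lemma l2_add:
  assumes "u \<in> l2" "v \<in> l2"
  shows "(\<lambda>x. u x + v x) \<in> l2" and "l2norm (\<lambda>x. u x + v x) \<le> l2norm u + l2norm v"
  by (rule l2_triangle[OF assms]; simp add: norm_triangle_ineq)+

lemma l2_diff:
  assumes "u \<in> l2" "v \<in> l2"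
  shows "vdiff u v \<in> l2" and "l2norm (vdiff u v) \<le> l2norm u + l2norm v"
  by (rule l2_triangle[OF assms]; simp add: vdiff_def norm_triangle_ineq4)+

lemma l2_scale:
  assumes "v \<in> l2"
  shows "(\<lambda>x. c * v x) \<in> l2" and "l2norm (\<lambda>x. c * v x) = cmod c * l2norm v"
proof -
  show "(\<lambda>x. c * v x) \<in> l2" using assms
    by (auto simp: l2_def norm_mult power_mult_distrib intro: summable_on_cmult_right)
  have "infsum (\<lambda>x. (cmod (c * v x))\<^sup>2) UNIV = (cmod c)\<^sup>2 * infsum (\<lambda>x. (cmod (v x))\<^sup>2) UNIV"
    by (simp add: norm_mult power_mult_distrib infsum_cmult_right')
  then show "l2norm (\<lambda>x. c * v x) = cmod c * l2norm v"
    unfolding l2norm_def by (simp add: real_sqrt_mult)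
qed

lemma l2_contraction:
  assumes "v \<in> l2" "\<And>x. cmod (d x) \<le> 1"
  shows "(\<lambda>x. d x * v x) \<in> l2" and "l2norm (\<lambda>x. d x * v x) \<le> l2norm v"
proof -
  have "cmod (d x * v x) \<le> cmod (v x)" for x
    using assms(2)[of x] by (simp add: norm_mult mult_left_le_one_le)
  then show "(\<lambda>x. d x * v x) \<in> l2" and "l2norm (\<lambda>x. d x * v x) \<le> l2norm v"
    using l2_dominated[OF assms(1)] by auto
qed

lemma l2_cnj: "v \<in> l2 \<Longrightarrow> (\<lambda>x. cnj (v x)) \<in> l2"
  by (simp add: l2_def)

lemma l2norm_cnj: "l2norm (\<lambda>x. cnj (v x)) = l2norm v"
  by (simp add: l2norm_def)

lemma l2_finite_support: "finite T \<Longrightarrow> (\<And>x. x \<notin> T \<Longrightarrow> v x = 0) \<Longrightarrow> v \<in> l2"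
  unfolding l2_def mem_Collect_eq by (rule summable_on_finite_support) auto

lemma indicator_l2: "(indicator {y} :: _ \<Rightarrow> complex) \<in> l2"
  by (rule l2_finite_support[of "{y}"]) auto

lemma l2norm_indicator: "l2norm (indicator {y} :: _ \<Rightarrow> complex) = 1"
  unfolding l2norm_def by (subst infsum_finite_support[of "{y}"]) auto

lemma l2_cauchy_schwarz:
  assumes "u \<in> l2" "v \<in> l2"
  shows "(\<lambda>x. cmod (u x) * cmod (v x)) summable_on UNIV"
    and "infsum (\<lambda>x. cmod (u x) * cmod (v x)) UNIV \<le> l2norm u * l2norm v"
proof -
  have sums: "(\<Sum>x\<in>T. cmod (u x) * cmod (v x)) \<le> l2norm u * l2norm v" for T
  proof -
    have "(\<Sum>x\<in>T. cmod (u x) * cmod (v x)) \<le> L2_set (\<lambda>x. cmod (u x)) T * L2_set (\<lambda>x. cmod (v x)) T"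
      using L2_set_mult_ineq[of "\<lambda>x. cmod (u x)" "\<lambda>x. cmod (v x)" T] by simp
    also have "\<dots> \<le> l2norm u * l2norm v"
      using assms by (intro mult_mono L2_set_le_l2norm l2norm_nonneg L2_set_nonneg)
    finally show ?thesis .
  qed
  show s: "(\<lambda>x. cmod (u x) * cmod (v x)) summable_on UNIV"
    by (rule nonneg_bdd_above_summable_on) (auto intro: sums)
  show "infsum (\<lambda>x. cmod (u x) * cmod (v x)) UNIV \<le> l2norm u * l2norm v"
    by (rule infsum_le_finite_sums[OF s sums])
qed

lemma l2_mult_summable:
  assumes "u \<in> l2" "v \<in> l2"
  shows "(\<lambda>x. u x * v x) summable_on UNIV"
  by (rule abs_summable_summable) (use l2_cauchy_schwarz(1)[OF assms] in \<open>simp add: norm_mult\<close>)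

lemma norm_infsum_mult_le:
  assumes "u \<in> l2" "v \<in> l2"
  shows "cmod (infsum (\<lambda>x. u x * v x) UNIV) \<le> l2norm u * l2norm v"
proof -
  have "cmod (infsum (\<lambda>x. u x * v x) UNIV) \<le> infsum (\<lambda>x. cmod (u x) * cmod (v x)) UNIV"
    using norm_infsum_bound[of "\<lambda>x. u x * v x" UNIV] l2_cauchy_schwarz(1)[OF assms]
    by (simp add: norm_mult)
  also have "\<dots> \<le> l2norm u * l2norm v" by (rule l2_cauchy_schwarz(2)[OF assms])
  finally show ?thesis .
qed

lemma norm_l2inner_le:
  assumes "u \<in> l2" "v \<in> l2"
  shows "cmod (l2inner u v) \<le> l2norm u * l2norm v"
  using norm_infsum_mult_le[OF assms(1) l2_cnj[OF assms(2)]] unfolding l2inner_def l2norm_cnj .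

lemma l2inner_commute: "l2inner u v = cnj (l2inner v u)"
  unfolding l2inner_def by (simp flip: infsum_cnj add: mult.commute)

lemma l2inner_self: "l2inner v v = complex_of_real ((l2norm v)\<^sup>2)"
proof -
  have "l2inner v v = infsum (\<lambda>x. complex_of_real ((cmod (v x))\<^sup>2)) UNIV"
    unfolding l2inner_def by (simp only: complex_norm_square[symmetric])
  also have "\<dots> = complex_of_real (infsum (\<lambda>x. (cmod (v x))\<^sup>2) UNIV)"
    by (rule infsum_of_real)
  finally show ?thesis by (simp add: l2norm_power2)
qed

lemma l2inner_add_left:
  assumes "u \<in> l2" "u' \<in> l2" "v \<in> l2"
  shows "l2inner (\<lambda>x. u x + u' x) v = l2inner u v + l2inner u' v"
  unfolding l2inner_def
  using infsum_add[OF l2_mult_summable[OF assms(1) l2_cnj[OF assms(3)]]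
      l2_mult_summable[OF assms(2) l2_cnj[OF assms(3)]]]
  by (simp add: distrib_right)

lemma l2inner_diff_left:
  assumes "u \<in> l2" "u' \<in> l2" "v \<in> l2"
  shows "l2inner (vdiff u u') v = l2inner u v - l2inner u' v"
  unfolding l2inner_def vdiff_def
  using infsum_diff[OF l2_mult_summable[OF assms(1) l2_cnj[OF assms(3)]]
      l2_mult_summable[OF assms(2) l2_cnj[OF assms(3)]]]
  by (simp add: left_diff_distrib)

lemma l2inner_scale_left: "l2inner (\<lambda>x. c * u x) v = c * l2inner u v"
  unfolding l2inner_def by (simp add: mult.assoc infsum_cmult_right')

lemma l2norm_vdiff_commute: "l2norm (vdiff u v) = l2norm (vdiff v u)"
  unfolding l2norm_def vdiff_def by (simp add: norm_minus_commute)

definition trunc :: "'x set \<Rightarrow> ('x \<Rightarrow> complex) \<Rightarrow> ('x \<Rightarrow> complex)" where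
  "trunc T v = (\<lambda>x. if x \<in> T then v x else 0)"

lemma trunc_l2: "finite T \<Longrightarrow> trunc T v \<in> l2"
  by (rule l2_finite_support[of T]) (auto simp: trunc_def)

lemma tendsto_trunc:
  assumes "v \<in> l2"
  shows "((\<lambda>T. l2norm (vdiff v (trunc T v))) \<longlongrightarrow> 0) (finite_subsets_at_top UNIV)"
proof -
  define f where "f = (\<lambda>x. (cmod (v x))\<^sup>2)"
  have f: "f summable_on UNIV" using assms unfolding f_def l2_def by simp
  have eq: "l2norm (vdiff v (trunc T v)) = sqrt (infsum f UNIV - sum f T)" if T: "finite T" for T
  proof -
    have "infsum (\<lambda>x. (cmod (vdiff v (trunc T v) x))\<^sup>2) UNIV = infsum f (UNIV - T)"
      by (rule infsum_cong_neutral) (auto simp: vdiff_def trunc_def f_def)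
    also have "\<dots> = infsum f UNIV - sum f T"
      using infsum_Diff[OF f _ subset_UNIV, of T] T by simp
    finally show ?thesis by (simp add: l2norm_def)
  qed
  have "((\<lambda>T. sqrt (infsum f UNIV - sum f T)) \<longlongrightarrow> sqrt (infsum f UNIV - infsum f UNIV))
      (finite_subsets_at_top UNIV)"
    using f unfolding summable_iff_has_sum_infsum has_sum_def by (intro tendsto_intros)
  then have "((\<lambda>T. sqrt (infsum f UNIV - sum f T)) \<longlongrightarrow> 0) (finite_subsets_at_top UNIV)"
    by simp
  then show ?thesis
    by (rule Lim_transform_eventually)
       (auto simp: eventually_finite_subsets_at_top eq intro!: exI[of _ "{}"])
qed

section \<open>Bounded operators\<close>

lemma bounded_op_summable: "bounded_op a \<Longrightarrow> v \<in> l2 \<Longrightarrow> (\<lambda>y. a x y * v y) summable_on UNIV"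
  by (auto simp: bounded_op_def)

lemma bounded_op_l2: "bounded_op a \<Longrightarrow> v \<in> l2 \<Longrightarrow> mapply a v \<in> l2"
  by (auto simp: bounded_op_def)

lemma bounded_opI:
  assumes "\<And>v x. v \<in> l2 \<Longrightarrow> (\<lambda>y. a x y * v y) summable_on UNIV"
    and "\<And>v. v \<in> l2 \<Longrightarrow> mapply a v \<in> l2"
    and "\<And>v. v \<in> l2 \<Longrightarrow> l2norm (mapply a v) \<le> C * l2norm v"
  shows "bounded_op a"
  using assms unfolding bounded_op_def by blast

lemma zero_l2: "(\<lambda>x. 0) \<in> l2" and l2norm_zero: "l2norm (\<lambda>x. 0) = 0"
  by (auto simp: l2_def l2norm_def)

lemma mapply_zero: "mapply a (\<lambda>x. 0) = (\<lambda>x. 0)"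
  by (simp add: mapply_def)

lemma mapply_scale: "mapply a (\<lambda>x. c * v x) = (\<lambda>x. c * mapply a v x)"
  unfolding mapply_def by (simp add: mult.left_commute infsum_cmult_right')

lemma mapply_vdiff:
  assumes "bounded_op a" "u \<in> l2" "v \<in> l2"
  shows "mapply a (vdiff u v) = vdiff (mapply a u) (mapply a v)"
  unfolding mapply_def vdiff_def
  using infsum_diff[OF bounded_op_summable[OF assms(1,2)] bounded_op_summable[OF assms(1,3)]]
  by (simp add: right_diff_distrib)

lemma opnorm_bdd_above:
  assumes "bounded_op a"
  shows "bdd_above {l2norm (mapply a v) | v. v \<in> l2 \<and> l2norm v \<le> 1}"
proof -
  obtain C where C: "\<forall>v\<in>l2. l2norm (mapply a v) \<le> C * l2norm v"
    using assms by (auto simp: bounded_op_def)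
  have "l2norm (mapply a v) \<le> \<bar>C\<bar>" if "v \<in> l2" "l2norm v \<le> 1" for v
  proof -
    have "l2norm (mapply a v) \<le> \<bar>C\<bar> * l2norm v"
      using C that(1) l2norm_nonneg[of v] by (meson abs_ge_self mult_right_mono order_trans)
    also have "\<dots> \<le> \<bar>C\<bar>" using that(2) by (simp add: mult_left_le)
    finally show ?thesis .
  qed
  then show ?thesis by (auto intro: bdd_aboveI[where M="\<bar>C\<bar>"])
qed

lemma l2norm_mapply_le_opnorm:
  assumes "bounded_op a" "v \<in> l2" "l2norm v \<le> 1"
  shows "l2norm (mapply a v) \<le> opnorm a"
  unfolding opnorm_def by (rule cSup_upper[OF _ opnorm_bdd_above[OF assms(1)]]) (use assms in auto)

lemma opnorm_nonneg: "bounded_op a \<Longrightarrow> opnorm a \<ge> 0"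
  using l2norm_mapply_le_opnorm[of a "\<lambda>x. 0"] by (simp add: zero_l2 l2norm_zero mapply_zero)

lemma l2norm_mapply_le:
  assumes "bounded_op a" "v \<in> l2"
  shows "l2norm (mapply a v) \<le> opnorm a * l2norm v"
proof (cases "l2norm v = 0")
  case True
  then have "v = (\<lambda>x. 0)" using l2norm_eq_0_imp[OF assms(2)] by auto
  then show ?thesis by (simp add: mapply_zero l2norm_zero True)
next
  case False
  define n where "n = l2norm v"
  have n: "n > 0" using False l2norm_nonneg[of v] unfolding n_def by linarith
  define w where "w = (\<lambda>x. complex_of_real (1 / n) * v x)"
  have "w \<in> l2" and "l2norm w = 1"
    using l2_scale[OF assms(2), of "complex_of_real (1 / n)"] n unfolding w_def n_def
    by (auto simp: norm_divide)
  then have "l2norm (mapply a w) \<le> opnorm a" by (intro l2norm_mapply_le_opnorm[OF assms(1)]) auto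
  moreover have "l2norm (mapply a w) = l2norm (mapply a v) / n"
    unfolding w_def mapply_scale using l2_scale(2)[OF bounded_op_l2[OF assms], of "complex_of_real (1 / n)"] n
    by (simp add: norm_divide)
  ultimately show ?thesis using n unfolding n_def by (simp add: divide_le_eq mult.commute)
qed

lemma opnorm_le:
  assumes "bounded_op a" "C \<ge> 0" "\<And>v. v \<in> l2 \<Longrightarrow> l2norm (mapply a v) \<le> C * l2norm v"
  shows "opnorm a \<le> C"
  unfolding opnorm_def
proof (rule cSup_least)
  have "l2norm (\<lambda>x. 0) \<le> (1::real)" by (simp add: l2norm_zero)
  then show "{l2norm (mapply a v) |v. v \<in> l2 \<and> l2norm v \<le> 1} \<noteq> {}"
    using zero_l2 by blast
next
  fix r assume "r \<in> {l2norm (mapply a v) |v. v \<in> l2 \<and> l2norm v \<le> 1}"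
  then obtain v where "v \<in> l2" "l2norm v \<le> 1" "r = l2norm (mapply a v)" by auto
  then show "r \<le> C" using assms(3)[of v] assms(2) mult_left_mono[of "l2norm v" 1 C] by simp
qed

lemma less_opnormD:
  assumes "bounded_op a" "c < opnorm a"
  obtains v where "v \<in> l2" "l2norm v \<le> 1" "c < l2norm (mapply a v)"
proof -
  have "\<exists>v. v \<in> l2 \<and> l2norm v \<le> 1 \<and> c < l2norm (mapply a v)"
  proof (rule ccontr)
    assume "\<nexists>v. v \<in> l2 \<and> l2norm v \<le> 1 \<and> c < l2norm (mapply a v)"
    then have "opnorm a \<le> c" unfolding opnorm_def
      by (intro cSup_least) (auto intro!: exI[of _ "\<lambda>x. 0"] simp: zero_l2 l2norm_zero not_less)
    then show False using assms(2) by simp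
  qed
  then show ?thesis using that by blast
qed

lemma mapply_madd:
  assumes "bounded_op a" "bounded_op b" "v \<in> l2"
  shows "mapply (madd a b) v = (\<lambda>x. mapply a v x + mapply b v x)"
  unfolding mapply_def madd_def
  using infsum_add[OF bounded_op_summable[OF assms(1,3)] bounded_op_summable[OF assms(2,3)]]
  by (simp add: distrib_right)

lemma bounded_op_madd:
  assumes "bounded_op a" "bounded_op b"
  shows "bounded_op (madd a b)" and "opnorm (madd a b) \<le> opnorm a + opnorm b"
proof -
  have s: "(\<lambda>y. madd a b x y * v y) summable_on UNIV" if "v \<in> l2" for v x
    using summable_on_add[OF bounded_op_summable[OF assms(1) that] bounded_op_summable[OF assms(2) that]]
    by (simp add: madd_def distrib_right)
  have n: "mapply (madd a b) v \<in> l2 \<and> l2norm (mapply (madd a b) v) \<le> (opnorm a + opnorm b) * l2norm v"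
    if "v \<in> l2" for v
    unfolding mapply_madd[OF assms that]
    using l2_add[OF bounded_op_l2[OF assms(1) that] bounded_op_l2[OF assms(2) that]]
      l2norm_mapply_le[OF assms(1) that] l2norm_mapply_le[OF assms(2) that]
    by (auto simp: distrib_right)
  show b: "bounded_op (madd a b)" by (rule bounded_opI[OF s]) (use n in auto)
  show "opnorm (madd a b) \<le> opnorm a + opnorm b"
    by (rule opnorm_le[OF b]) (use n opnorm_nonneg[OF assms(1)] opnorm_nonneg[OF assms(2)] in auto)
qed

lemma mapply_mscale: "mapply (mscale c a) v = (\<lambda>x. c * mapply a v x)"
  unfolding mapply_def mscale_def by (simp add: mult.assoc infsum_cmult_right')

lemma bounded_op_mscale:
  assumes "bounded_op a"
  shows "bounded_op (mscale c a)" and "opnorm (mscale c a) \<le> cmod c * opnorm a"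
proof -
  have s: "(\<lambda>y. mscale c a x y * v y) summable_on UNIV" if "v \<in> l2" for v x
    using summable_on_cmult_right[OF bounded_op_summable[OF assms that], of c]
    by (simp add: mscale_def mult.assoc)
  have n: "mapply (mscale c a) v \<in> l2 \<and> l2norm (mapply (mscale c a) v) \<le> (cmod c * opnorm a) * l2norm v"
    if "v \<in> l2" for v
    unfolding mapply_mscale using l2_scale[OF bounded_op_l2[OF assms that], of c]
      l2norm_mapply_le[OF assms that]
    by (auto simp: mult.assoc intro: mult_left_mono)
  show b: "bounded_op (mscale c a)" by (rule bounded_opI[OF s]) (use n in auto)
  show "opnorm (mscale c a) \<le> cmod c * opnorm a"
    by (rule opnorm_le[OF b]) (use n opnorm_nonneg[OF assms(1)] in auto)
qed

lemma msub_eq_madd_mscale: "msub a b = madd a (mscale (-1) b)"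
  by (auto simp: msub_def madd_def mscale_def)

lemma bounded_op_msub:
  assumes "bounded_op a" "bounded_op b"
  shows "bounded_op (msub a b)" and "opnorm (msub a b) \<le> opnorm a + opnorm b"
  using bounded_op_madd[OF assms(1) bounded_op_mscale(1)[OF assms(2)], of "-1"]
    bounded_op_mscale(2)[OF assms(2), of "-1"]
  unfolding msub_eq_madd_mscale by auto

definition mzero :: "'x mat" where
  "mzero = (\<lambda>x y. 0)"

lemma bounded_op_mzero: "bounded_op (mzero :: 'x mat)" and opnorm_mzero: "opnorm (mzero :: 'x mat) = 0"
proof -
  have m: "mapply (mzero :: 'x mat) v = (\<lambda>x. 0)" for v by (simp add: mapply_def mzero_def)
  have z: "(mzero :: 'x mat) x y = 0" for x y by (simp add: mzero_def)
  show b: "bounded_op (mzero :: 'x mat)"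
    by (rule bounded_opI[where C=0]) (simp_all add: m z zero_l2 l2norm_zero)
  show "opnorm (mzero :: 'x mat) = 0"
    using opnorm_le[OF b, of 0] opnorm_nonneg[OF b] by (simp add: m l2norm_zero)
qed

definition diag :: "('x \<Rightarrow> complex) \<Rightarrow> 'x mat" where
  "diag d = (\<lambda>x y. if x = y then d x else 0)"

definition diag_mult :: "('x \<Rightarrow> complex) \<Rightarrow> 'x mat \<Rightarrow> 'x mat" where
  "diag_mult d a = (\<lambda>x y. d x * a x y)"

definition mult_diag :: "'x mat \<Rightarrow> ('x \<Rightarrow> complex) \<Rightarrow> 'x mat" where
  "mult_diag a d = (\<lambda>x y. a x y * d y)"

lemma mmult_diag_right: "mmult a (diag d) = mult_diag a d"
  unfolding mmult_def diag_def mult_diag_def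
  by (intro ext, subst infsum_finite_support[where T="{_}"]) auto

lemma mmult_diag_left: "mmult (diag d) a = diag_mult d a"
  unfolding mmult_def diag_def diag_mult_def
  by (intro ext, subst infsum_finite_support[where T="{_}"]) auto

lemma mapply_diag: "mapply (diag d) v = (\<lambda>x. d x * v x)"
  unfolding mapply_def diag_def
  by (intro ext, subst infsum_finite_support[where T="{_}"]) auto

lemma mapply_diag_mult: "mapply (diag_mult d a) v = (\<lambda>x. d x * mapply a v x)"
  unfolding mapply_def diag_mult_def by (simp add: mult.assoc infsum_cmult_right')

lemma mapply_mult_diag: "mapply (mult_diag a d) v = mapply a (\<lambda>y. d y * v y)"
  unfolding mapply_def mult_diag_def by (simp add: mult.assoc mult.commute mult.left_commute)

lemma bounded_op_diag:
  assumes "\<And>x. cmod (d x) \<le> 1"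
  shows "bounded_op (diag d)" and "opnorm (diag d) \<le> 1"
proof -
  have s: "(\<lambda>y. diag d x y * v y) summable_on UNIV" for v x
    by (rule summable_on_finite_support[of "{x}"]) (auto simp: diag_def)
  have n: "mapply (diag d) v \<in> l2 \<and> l2norm (mapply (diag d) v) \<le> 1 * l2norm v" if "v \<in> l2" for v
    unfolding mapply_diag using l2_contraction[where d=d, OF that assms] by simp
  show b: "bounded_op (diag d)" by (rule bounded_opI[OF s, where C=1]) (use n in auto)
  show "opnorm (diag d) \<le> 1" by (rule opnorm_le[OF b]) (use n in auto)
qed

lemma bounded_op_diag_mult:
  assumes "bounded_op a" "\<And>x. cmod (d x) \<le> 1"
  shows "bounded_op (diag_mult d a)" and "opnorm (diag_mult d a) \<le> opnorm a"
proof -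
  have s: "(\<lambda>y. diag_mult d a x y * v y) summable_on UNIV" if "v \<in> l2" for v x
    using summable_on_cmult_right[OF bounded_op_summable[OF assms(1) that], of "d x"]
    by (simp add: diag_mult_def mult.assoc)
  have n: "mapply (diag_mult d a) v \<in> l2 \<and> l2norm (mapply (diag_mult d a) v) \<le> opnorm a * l2norm v"
    if "v \<in> l2" for v
    unfolding mapply_diag_mult
    using l2_contraction[where d=d, OF bounded_op_l2[OF assms(1) that] assms(2)] l2norm_mapply_le[OF assms(1) that]
    by auto
  show b: "bounded_op (diag_mult d a)" by (rule bounded_opI[OF s]) (use n in auto)
  show "opnorm (diag_mult d a) \<le> opnorm a"
    by (rule opnorm_le[OF b]) (use n opnorm_nonneg[OF assms(1)] in auto)
qed

lemma bounded_op_mult_diag: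
  assumes "bounded_op a" "\<And>x. cmod (d x) \<le> 1"
  shows "bounded_op (mult_diag a d)" and "opnorm (mult_diag a d) \<le> opnorm a"
proof -
  have s: "(\<lambda>y. mult_diag a d x y * v y) summable_on UNIV" if "v \<in> l2" for v x
    using bounded_op_summable[OF assms(1) l2_contraction(1)[where d=d, OF that assms(2)]]
    by (simp add: mult_diag_def mult.assoc)
  have n: "mapply (mult_diag a d) v \<in> l2 \<and> l2norm (mapply (mult_diag a d) v) \<le> opnorm a * l2norm v"
    if "v \<in> l2" for v
  proof -
    note w = l2_contraction[where d=d, OF that assms(2)]
    have "l2norm (mapply a (\<lambda>y. d y * v y)) \<le> opnorm a * l2norm (\<lambda>y. d y * v y)"
      by (rule l2norm_mapply_le[OF assms(1) w(1)])
    also have "\<dots> \<le> opnorm a * l2norm v" using w(2) opnorm_nonneg[OF assms(1)] by (rule mult_left_mono)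
    finally show ?thesis unfolding mapply_mult_diag using bounded_op_l2[OF assms(1) w(1)] by auto
  qed
  show b: "bounded_op (mult_diag a d)" by (rule bounded_opI[OF s]) (use n in auto)
  show "opnorm (mult_diag a d) \<le> opnorm a"
    by (rule opnorm_le[OF b]) (use n opnorm_nonneg[OF assms(1)] in auto)
qed

lemma norm_indicator_le_1: "cmod (indicator S x :: complex) \<le> 1"
  by (simp add: indicator_def)

lemma mapply_indicator: "mapply a (indicator {y}) = (\<lambda>x. a x y)"
  unfolding mapply_def by (intro ext, subst infsum_finite_support[of "{y}"]) auto

lemma column_l2:
  assumes "bounded_op a"
  shows "(\<lambda>x. a x y) \<in> l2" and "l2norm (\<lambda>x. a x y) \<le> opnorm a"
  using bounded_op_l2[OF assms indicator_l2, of y] l2norm_mapply_le[OF assms indicator_l2, of y]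
  by (simp_all add: mapply_indicator l2norm_indicator)

lemma norm_entry_le_opnorm: "bounded_op a \<Longrightarrow> cmod (a x y) \<le> opnorm a"
  using column_l2[of a y] norm_le_l2norm[of "\<lambda>x. a x y" x] by auto

definition adj :: "'x mat \<Rightarrow> 'x mat" where
  "adj a = (\<lambda>x y. cnj (a y x))"

lemma infsum_sum:
  fixes f :: "'a \<Rightarrow> 'c \<Rightarrow> 'b::{topological_comm_monoid_add, t2_space}"
  assumes "finite T" "\<And>y. y \<in> T \<Longrightarrow> (\<lambda>x. f x y) summable_on A"
  shows "infsum (\<lambda>x. \<Sum>y\<in>T. f x y) A = (\<Sum>y\<in>T. infsum (\<lambda>x. f x y) A)"
    and "(\<lambda>x. \<Sum>y\<in>T. f x y) summable_on A"
  using assms by (induction T rule: finite_induct) (auto simp: infsum_add summable_on_add)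

lemma adj_inner_finite_support:
  assumes a: "bounded_op a" and v: "v \<in> l2" and T: "finite T" and w: "\<And>x. x \<notin> T \<Longrightarrow> w x = 0"
  shows "l2inner (mapply a w) v = l2inner w (mapply (adj a) v)"
proof -
  have mw: "mapply a w x = (\<Sum>y\<in>T. a x y * w y)" for x
    unfolding mapply_def by (rule infsum_finite_support[OF T]) (use w in auto)
  have col: "(\<lambda>x. w y * (a x y * cnj (v x))) summable_on UNIV" for y
    by (rule summable_on_cmult_right[OF l2_mult_summable[OF column_l2(1)[OF a] l2_cnj[OF v]]])
  have "l2inner (mapply a w) v = infsum (\<lambda>x. \<Sum>y\<in>T. w y * (a x y * cnj (v x))) UNIV"
    unfolding l2inner_def mw by (simp add: sum_distrib_left sum_distrib_right mult_ac)
  also have "\<dots> = (\<Sum>y\<in>T. w y * infsum (\<lambda>x. a x y * cnj (v x)) UNIV)"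
    by (simp add: infsum_sum(1)[OF T col] infsum_cmult_right')
  also have "\<dots> = (\<Sum>y\<in>T. w y * cnj (mapply (adj a) v y))"
    unfolding mapply_def adj_def by (simp flip: infsum_cnj)
  also have "\<dots> = l2inner w (mapply (adj a) v)"
    unfolding l2inner_def by (rule infsum_finite_support[OF T, symmetric]) (use w in auto)
  finally show ?thesis .
qed

lemma bounded_op_adj:
  assumes a: "bounded_op a"
  shows "bounded_op (adj a)" and "opnorm (adj a) \<le> opnorm a"
proof -
  have n: "mapply (adj a) v \<in> l2 \<and> l2norm (mapply (adj a) v) \<le> opnorm a * l2norm v" if v: "v \<in> l2" for v
  proof -
    define u where "u = mapply (adj a) v"
    have "L2_set (\<lambda>x. cmod (u x)) T \<le> opnorm a * l2norm v" if T: "finite T" for T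
    proof -
      define t where "t = l2norm (trunc T u)"
      have t_eq: "L2_set (\<lambda>x. cmod (u x)) T = t"
        unfolding t_def L2_set_def l2norm_def
        by (subst infsum_finite_support[OF T]) (auto simp: trunc_def intro!: sum.cong)
      have "complex_of_real (t\<^sup>2) = l2inner (trunc T u) u"
        unfolding t_def l2inner_self[symmetric] l2inner_def by (rule infsum_cong) (simp add: trunc_def)
      also have "\<dots> = l2inner (mapply a (trunc T u)) v"
        unfolding u_def by (rule adj_inner_finite_support[OF a v T, symmetric]) (simp add: trunc_def)
      finally have "t\<^sup>2 \<le> l2norm (mapply a (trunc T u)) * l2norm v"
        using norm_l2inner_le[OF bounded_op_l2[OF a trunc_l2[OF T]] v] by (metis norm_of_real abs_le_D1)
      also have "\<dots> \<le> opnorm a * t * l2norm v"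
        unfolding t_def by (rule mult_right_mono[OF l2norm_mapply_le[OF a trunc_l2[OF T]] l2norm_nonneg])
      finally have "t * t \<le> (opnorm a * l2norm v) * t" by (simp add: power2_eq_square mult_ac)
      moreover have "t \<ge> 0" "opnorm a * l2norm v \<ge> 0"
        unfolding t_def using opnorm_nonneg[OF a] l2norm_nonneg by (auto intro: mult_nonneg_nonneg)
      ultimately show ?thesis unfolding t_eq
        by (cases "t = 0") (auto intro: mult_right_le_imp_le)
    qed
    then show ?thesis unfolding u_def by (auto intro: L2_set_bounded_imp_l2)
  qed
  have s: "(\<lambda>y. adj a x y * v y) summable_on UNIV" if "v \<in> l2" for v x
    unfolding adj_def using l2_mult_summable[OF l2_cnj[OF column_l2(1)[OF a]] that] .
  show b: "bounded_op (adj a)" by (rule bounded_opI[OF s]) (use n in auto)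
  show "opnorm (adj a) \<le> opnorm a" by (rule opnorm_le[OF b]) (use n opnorm_nonneg[OF a] in auto)
qed

lemma row_l2:
  assumes "bounded_op a"
  shows "(\<lambda>y. a x y) \<in> l2" and "l2norm (\<lambda>y. a x y) \<le> opnorm a"
proof -
  have e: "(\<lambda>y. a x y) = (\<lambda>y. cnj (adj a y x))" by (simp add: adj_def)
  show "(\<lambda>y. a x y) \<in> l2" unfolding e using l2_cnj column_l2(1)[OF bounded_op_adj(1)[OF assms]] .
  show "l2norm (\<lambda>y. a x y) \<le> opnorm a" unfolding e l2norm_cnj
    using column_l2(2)[OF bounded_op_adj(1)[OF assms], of x] bounded_op_adj(2)[OF assms] by linarith
qed

lemma tendsto_l2inner_left:
  assumes "\<forall>\<^sub>F T in F. g T \<in> l2" "u \<in> l2" "w \<in> l2"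
    and "((\<lambda>T. l2norm (vdiff (g T) u)) \<longlongrightarrow> 0) F"
  shows "((\<lambda>T. l2inner (g T) w) \<longlongrightarrow> l2inner u w) F"
proof (rule LIM_zero_cancel, rule Lim_null_comparison)
  show "\<forall>\<^sub>F T in F. norm (l2inner (g T) w - l2inner u w) \<le> l2norm (vdiff (g T) u) * l2norm w"
    using assms(1)
  proof eventually_elim
    case (elim T)
    then show ?case
      using norm_l2inner_le[OF l2_diff(1)[OF elim assms(2)] assms(3)]
      by (simp add: l2inner_diff_left[OF elim assms(2,3)])
  qed
  show "((\<lambda>T. l2norm (vdiff (g T) u) * l2norm w) \<longlongrightarrow> 0) F"
    using tendsto_mult_left_zero[OF assms(4)] .
qed

lemma adj_inner:
  assumes a: "bounded_op a" and v: "v \<in> l2" and w: "w \<in> l2"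
  shows "l2inner (mapply a v) w = l2inner v (mapply (adj a) w)"
proof -
  define F where "F = finite_subsets_at_top (UNIV :: 'a set)"
  have fin: "\<forall>\<^sub>F T in F. finite T" unfolding F_def by (rule eventually_finite_subsets_at_top_weakI) simp
  have tl2: "\<forall>\<^sub>F T in F. trunc T v \<in> l2" using fin by eventually_elim (rule trunc_l2)
  have atl2: "\<forall>\<^sub>F T in F. mapply a (trunc T v) \<in> l2" using tl2 by eventually_elim (rule bounded_op_l2[OF a])
  have trunc: "((\<lambda>T. l2norm (vdiff (trunc T v) v)) \<longlongrightarrow> 0) F"
    using tendsto_trunc[OF v] unfolding F_def l2norm_vdiff_commute[of v] .
  have "((\<lambda>T. l2norm (vdiff (mapply a (trunc T v)) (mapply a v))) \<longlongrightarrow> 0) F"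
  proof (rule Lim_null_comparison)
    show "\<forall>\<^sub>F T in F. norm (l2norm (vdiff (mapply a (trunc T v)) (mapply a v)))
        \<le> opnorm a * l2norm (vdiff (trunc T v) v)"
      using fin by eventually_elim
        (simp add: l2norm_nonneg mapply_vdiff[OF a trunc_l2 v, symmetric]
          l2norm_mapply_le[OF a l2_diff(1)[OF trunc_l2 v]])
    show "((\<lambda>T. opnorm a * l2norm (vdiff (trunc T v) v)) \<longlongrightarrow> 0) F"
      using tendsto_mult_right_zero[OF trunc] .
  qed
  then have "((\<lambda>T. l2inner (mapply a (trunc T v)) w) \<longlongrightarrow> l2inner (mapply a v) w) F"
    by (rule tendsto_l2inner_left[OF atl2 bounded_op_l2[OF a v] w])
  moreover have "\<forall>\<^sub>F T in F. l2inner (mapply a (trunc T v)) w = l2inner (trunc T v) (mapply (adj a) w)"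
    using fin by eventually_elim (auto intro: adj_inner_finite_support[OF a w] simp: trunc_def)
  ultimately have "((\<lambda>T. l2inner (trunc T v) (mapply (adj a) w)) \<longlongrightarrow> l2inner (mapply a v) w) F"
    by (rule Lim_transform_eventually)
  moreover have "((\<lambda>T. l2inner (trunc T v) (mapply (adj a) w)) \<longlongrightarrow> l2inner v (mapply (adj a) w)) F"
    by (rule tendsto_l2inner_left[OF tl2 v bounded_op_l2[OF bounded_op_adj(1)[OF a] w] trunc])
  moreover have "F \<noteq> bot" unfolding F_def by simp
  ultimately show ?thesis using tendsto_unique by blast
qed

lemma l2inner_selfadjoint_real:
  assumes "bounded_op s" "adj s = s" "v \<in> l2"
  shows "Im (l2inner (mapply s v) v) = 0"
proof -
  have "l2inner (mapply s v) v = cnj (l2inner (mapply s v) v)"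
    using adj_inner[OF assms(1,3,3)] assms(2) l2inner_commute by metis
  then show ?thesis by (metis cnj.simps(2) neg_equal_zero)
qed

section \<open>The uniform Roe algebra\<close>

lemma uroe_bounded_op: "a \<in> uroe \<Longrightarrow> bounded_op a"
  by (simp add: uroe_def)

lemma uroeD: "a \<in> uroe \<Longrightarrow> \<epsilon> > 0 \<Longrightarrow> \<exists>b. bounded_op b \<and> finite_prop b \<and> opnorm (msub a b) < \<epsilon>"
  by (simp add: uroe_def)

lemma uroeI:
  assumes "bounded_op a" "\<And>\<epsilon>. \<epsilon> > 0 \<Longrightarrow> \<exists>b. bounded_op b \<and> finite_prop b \<and> opnorm (msub a b) < \<epsilon>"
  shows "a \<in> uroe"
  using assms by (simp add: uroe_def)

lemma finite_prop_mono:
  assumes "finite_prop a" "\<And>x y. b x y \<noteq> 0 \<Longrightarrow> a x y \<noteq> 0"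
  shows "finite_prop b"
  using assms unfolding finite_prop_def by metis

lemma finite_prop_madd:
  assumes "finite_prop a" "finite_prop b"
  shows "finite_prop (madd a b)"
proof -
  obtain r s where r: "\<forall>x y. a x y \<noteq> 0 \<longrightarrow> dist x y \<le> r" and s: "\<forall>x y. b x y \<noteq> 0 \<longrightarrow> dist x y \<le> s"
    using assms unfolding finite_prop_def by blast
  have "dist x y \<le> max r s" if "madd a b x y \<noteq> 0" for x y
  proof (cases "a x y = 0")
    case True
    with that have "b x y \<noteq> 0" by (simp add: madd_def)
    with s show ?thesis by (simp add: le_max_iff_disj)
  next
    case False
    with r show ?thesis by (simp add: le_max_iff_disj)
  qed
  then show ?thesis unfolding finite_prop_def by blast
qed

lemma uroe_finite_prop:
  assumes "bounded_op a" "finite_prop a"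
  shows "a \<in> uroe"
proof -
  have "msub a a = mzero" by (auto simp: msub_def mzero_def)
  then show ?thesis using assms by (intro uroeI) (auto simp: opnorm_mzero)
qed

lemma uroe_madd:
  assumes "a \<in> uroe" "a' \<in> uroe"
  shows "madd a a' \<in> uroe"
proof (rule uroeI)
  show "bounded_op (madd a a')" using assms by (intro bounded_op_madd uroe_bounded_op)
  fix \<epsilon> :: real assume \<epsilon>: "\<epsilon> > 0"
  obtain b where b: "bounded_op b" "finite_prop b" "opnorm (msub a b) < \<epsilon> / 2"
    using uroeD[OF assms(1), of "\<epsilon> / 2"] \<epsilon> by auto
  obtain b' where b': "bounded_op b'" "finite_prop b'" "opnorm (msub a' b') < \<epsilon> / 2"
    using uroeD[OF assms(2), of "\<epsilon> / 2"] \<epsilon> by auto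
  have "msub (madd a a') (madd b b') = madd (msub a b) (msub a' b')"
    by (simp add: msub_def madd_def fun_eq_iff)
  then have "opnorm (msub (madd a a') (madd b b')) \<le> opnorm (msub a b) + opnorm (msub a' b')"
    using assms b b' by (metis bounded_op_madd(2) bounded_op_msub(1) uroe_bounded_op)
  then show "\<exists>b. bounded_op b \<and> finite_prop b \<and> opnorm (msub (madd a a') b) < \<epsilon>"
    using b b' by (intro exI[of _ "madd b b'"]) (auto intro: bounded_op_madd finite_prop_madd)
qed

lemma uroe_closed_lipschitz:
  assumes a: "a \<in> uroe" and C: "C \<ge> 0"
    and bdd: "\<And>b. bounded_op b \<Longrightarrow> bounded_op (T b)"
    and fp: "\<And>b. finite_prop b \<Longrightarrow> finite_prop (T b)"
    and lip: "\<And>b. bounded_op b \<Longrightarrow> opnorm (msub (T a) (T b)) \<le> C * opnorm (msub a b)"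
  shows "T a \<in> uroe"
proof (rule uroeI)
  show "bounded_op (T a)" using a by (intro bdd uroe_bounded_op)
  fix \<epsilon> :: real assume \<epsilon>: "\<epsilon> > 0"
  obtain b where b: "bounded_op b" "finite_prop b" "opnorm (msub a b) < \<epsilon> / (C + 1)"
    using uroeD[OF a, of "\<epsilon> / (C + 1)"] \<epsilon> C by auto
  have "opnorm (msub (T a) (T b)) \<le> C * opnorm (msub a b)" by (rule lip[OF b(1)])
  also have "\<dots> \<le> C * (\<epsilon> / (C + 1))" using b(3) C by (intro mult_left_mono) auto
  also have "\<dots> < \<epsilon>" using \<epsilon> C by (simp add: field_simps)
  finally show "\<exists>b. bounded_op b \<and> finite_prop b \<and> opnorm (msub (T a) b) < \<epsilon>"
    using b by (intro exI[of _ "T b"]) (auto intro: bdd fp)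
qed

lemma uroe_mscale:
  fixes a :: "'x::metric_space mat"
  assumes "a \<in> uroe"
  shows "mscale c a \<in> uroe"
proof (rule uroe_closed_lipschitz[where T="mscale c", OF assms norm_ge_zero[of c]])
  fix b :: "'x mat" assume "bounded_op b"
  moreover have "msub (mscale c a) (mscale c b) = mscale c (msub a b)"
    by (auto simp: msub_def mscale_def algebra_simps)
  ultimately show "opnorm (msub (mscale c a) (mscale c b)) \<le> cmod c * opnorm (msub a b)"
    using assms by (metis bounded_op_mscale(2) bounded_op_msub(1) uroe_bounded_op)
qed (erule bounded_op_mscale(1), auto intro: finite_prop_mono simp: mscale_def)

lemma uroe_msub: "a \<in> uroe \<Longrightarrow> b \<in> uroe \<Longrightarrow> msub a b \<in> uroe"
  unfolding msub_eq_madd_mscale by (intro uroe_madd uroe_mscale)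

lemma uroe_adj:
  fixes a :: "'x::metric_space mat"
  assumes "a \<in> uroe"
  shows "adj a \<in> uroe"
proof (rule uroe_closed_lipschitz[where T=adj and C=1, OF assms])
  fix b :: "'x mat" assume "bounded_op b"
  moreover have "msub (adj a) (adj b) = adj (msub a b)" by (simp add: msub_def adj_def fun_eq_iff)
  ultimately show "opnorm (msub (adj a) (adj b)) \<le> 1 * opnorm (msub a b)"
    using assms by (metis bounded_op_adj(2) bounded_op_msub(1) uroe_bounded_op mult_1)
next
  fix b :: "'x mat" assume "finite_prop b"
  then show "finite_prop (adj b)"
    unfolding finite_prop_def adj_def by (metis complex_cnj_zero dist_commute)
qed (auto intro: bounded_op_adj)

lemma uroe_diag_mult:
  fixes a :: "'x::metric_space mat"
  assumes "a \<in> uroe" "\<And>x. cmod (d x) \<le> 1"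
  shows "diag_mult d a \<in> uroe"
proof (rule uroe_closed_lipschitz[where T="diag_mult d" and C=1, OF assms(1)])
  fix b :: "'x mat" assume "bounded_op b"
  moreover have "msub (diag_mult d a) (diag_mult d b) = diag_mult d (msub a b)"
    by (auto simp: msub_def diag_mult_def algebra_simps)
  ultimately show "opnorm (msub (diag_mult d a) (diag_mult d b)) \<le> 1 * opnorm (msub a b)"
    using assms by (metis bounded_op_diag_mult(2) bounded_op_msub(1) uroe_bounded_op mult_1)
qed (simp, erule bounded_op_diag_mult(1)[OF _ assms(2)], auto intro: finite_prop_mono simp: diag_mult_def)

lemma uroe_mult_diag:
  fixes a :: "'x::metric_space mat"
  assumes "a \<in> uroe" "\<And>x. cmod (d x) \<le> 1"
  shows "mult_diag a d \<in> uroe"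
proof (rule uroe_closed_lipschitz[where T="\<lambda>b. mult_diag b d" and C=1, OF assms(1)])
  fix b :: "'x mat" assume "bounded_op b"
  moreover have "msub (mult_diag a d) (mult_diag b d) = mult_diag (msub a b) d"
    by (auto simp: msub_def mult_diag_def algebra_simps)
  ultimately show "opnorm (msub (mult_diag a d) (mult_diag b d)) \<le> 1 * opnorm (msub a b)"
    using assms by (metis bounded_op_mult_diag(2) bounded_op_msub(1) uroe_bounded_op mult_1)
qed (simp, erule bounded_op_mult_diag(1)[OF _ assms(2)], auto intro: finite_prop_mono simp: mult_diag_def)

lemma uroe_diag: "(\<And>x. cmod (d x) \<le> 1) \<Longrightarrow> diag d \<in> uroe"
  by (rule uroe_finite_prop[OF bounded_op_diag(1)]) (auto simp: finite_prop_def diag_def intro!: exI[of _ 0])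

lemma uroe_mzero: "mzero \<in> uroe"
  by (rule uroe_finite_prop[OF bounded_op_mzero]) (auto simp: finite_prop_def mzero_def)

definition mone :: "'x mat" where
  "mone = diag (\<lambda>_. 1)"

lemma uroe_mone: "mone \<in> uroe" and bounded_op_mone: "bounded_op mone"
  and mapply_mone: "mapply mone v = v"
  by (simp_all add: mone_def uroe_diag bounded_op_diag mapply_diag)

definition matrix_unit :: "'x \<Rightarrow> 'x \<Rightarrow> 'x mat" where
  "matrix_unit x y = (\<lambda>u v. if u = x \<and> v = y then 1 else 0)"

lemma ematrix_eq_matrix_unit: "ematrix x = matrix_unit x x"
  by (simp add: ematrix_def matrix_unit_def)

lemma ematrix_eq_diag: "ematrix x = diag (indicator {x})"
  by (auto simp: ematrix_def diag_def fun_eq_iff)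

lemma mapply_matrix_unit: "mapply (matrix_unit x y) v = (\<lambda>u. v y * indicator {x} u)"
  unfolding mapply_def matrix_unit_def
  by (intro ext, subst infsum_finite_support[of "{y}"]) auto

lemma bounded_op_matrix_unit:
  shows "bounded_op (matrix_unit x y)" and "opnorm (matrix_unit x y) \<le> 1"
proof -
  have s: "(\<lambda>w. matrix_unit x y u w * v w) summable_on UNIV" for v u
    by (rule summable_on_finite_support[of "{y}"]) (auto simp: matrix_unit_def)
  have n: "mapply (matrix_unit x y) v \<in> l2 \<and> l2norm (mapply (matrix_unit x y) v) \<le> 1 * l2norm v"
    if "v \<in> l2" for v
    unfolding mapply_matrix_unit using l2_scale[OF indicator_l2, of "v y" x] norm_le_l2norm[OF that, of y]
    by (simp add: l2norm_indicator)
  show b: "bounded_op (matrix_unit x y)" by (rule bounded_opI[OF s, where C=1]) (use n in auto)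
  show "opnorm (matrix_unit x y) \<le> 1" by (rule opnorm_le[OF b]) (use n in auto)
qed

lemma uroe_matrix_unit: "matrix_unit x y \<in> uroe"
  by (rule uroe_finite_prop[OF bounded_op_matrix_unit(1)])
     (auto simp: finite_prop_def matrix_unit_def intro!: exI[of _ "dist x y"])

lemma uroe_ematrix: "ematrix x \<in> uroe"
  unfolding ematrix_eq_matrix_unit by (rule uroe_matrix_unit)

section \<open>Positive operators and positive functionals\<close>

lemma pos_op_iff: "pos_op a \<longleftrightarrow> bounded_op a \<and> (\<forall>v\<in>l2. l2inner (mapply a v) v \<in> \<real>\<^sub>\<ge>\<^sub>0)"
  by (auto simp: pos_op_def complex_nonneg_Reals_iff)

lemma pos_op_diag_indicator: "pos_op (diag (indicator S))"
  unfolding pos_op_iff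
proof (intro conjI ballI)
  show "bounded_op (diag (indicator S))" by (rule bounded_op_diag(1)[OF norm_indicator_le_1])
  fix v :: "'a \<Rightarrow> complex" assume v: "v \<in> l2"
  have "l2inner (mapply (diag (indicator S)) v) v
      = infsum (\<lambda>x. complex_of_real (indicator S x * (cmod (v x))\<^sup>2)) UNIV"
    unfolding mapply_diag l2inner_def
    by (intro infsum_cong) (simp add: indicator_def complex_norm_square[symmetric])
  also have "\<dots> = complex_of_real (infsum (\<lambda>x. indicator S x * (cmod (v x))\<^sup>2) UNIV)"
    by (rule infsum_of_real)
  finally show "l2inner (mapply (diag (indicator S)) v) v \<in> \<real>\<^sub>\<ge>\<^sub>0"
    by (simp add: complex_nonneg_Reals_iff Infinite_Sum.infsum_nonneg)
qed

lemma pos_op_ematrix: "pos_op (ematrix x)"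
  unfolding ematrix_eq_diag by (rule pos_op_diag_indicator)

lemma mone_eq_diag_indicator: "mone = diag (indicator UNIV)"
  by (simp add: mone_def)

lemma pos_op_mone: "pos_op mone"
  unfolding mone_eq_diag_indicator by (rule pos_op_diag_indicator)

lemma pos_op_diag_entry:
  assumes "pos_op a"
  shows "a x x \<in> \<real>\<^sub>\<ge>\<^sub>0"
proof -
  have "l2inner (mapply a (indicator {x})) (indicator {x}) = a x x"
    unfolding mapply_indicator l2inner_def by (subst infsum_finite_support[of "{x}"]) auto
  then show ?thesis using assms indicator_l2[of x] unfolding pos_op_iff by metis
qed

definition compress :: "'x set \<Rightarrow> 'x mat \<Rightarrow> 'x mat" where
  "compress S a = mult_diag (diag_mult (indicator S) a) (indicator S)"

lemma bounded_op_compress: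
  assumes "bounded_op a"
  shows "bounded_op (compress S a)" and "opnorm (compress S a) \<le> opnorm (diag_mult (indicator S) a)"
  unfolding compress_def using assms
  by (auto intro!: bounded_op_mult_diag bounded_op_diag_mult norm_indicator_le_1)

lemma uroe_compress: "a \<in> uroe \<Longrightarrow> compress S a \<in> uroe"
  unfolding compress_def by (intro uroe_mult_diag uroe_diag_mult norm_indicator_le_1)

lemma pos_op_compress:
  assumes "pos_op a"
  shows "pos_op (compress S a)"
  unfolding pos_op_iff
proof (intro conjI ballI)
  show "bounded_op (compress S a)" using assms by (intro bounded_op_compress) (simp add: pos_op_def)
  fix v :: "'a \<Rightarrow> complex" assume v: "v \<in> l2"
  define w where "w = (\<lambda>y. indicator S y * v y)"
  have "w \<in> l2" unfolding w_def by (rule l2_contraction(1)[OF v norm_indicator_le_1])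
  moreover have "l2inner (mapply (compress S a) v) v = l2inner (mapply a w) w"
    unfolding compress_def mapply_mult_diag mapply_diag_mult l2inner_def w_def
    by (intro infsum_cong) (simp add: indicator_def)
  ultimately show "l2inner (mapply (compress S a) v) v \<in> \<real>\<^sub>\<ge>\<^sub>0"
    using assms unfolding pos_op_iff by simp
qed

lemma pos_functional_madd:
  "pos_functional uroe \<phi> \<Longrightarrow> a \<in> uroe \<Longrightarrow> b \<in> uroe \<Longrightarrow> \<phi> (madd a b) = \<phi> a + \<phi> b"
  by (simp add: pos_functional_def lin_functional_def)

lemma pos_functional_mscale:
  "pos_functional uroe \<phi> \<Longrightarrow> a \<in> uroe \<Longrightarrow> \<phi> (mscale c a) = c * \<phi> a"
  by (simp add: pos_functional_def lin_functional_def)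

lemma pos_functional_mzero: "pos_functional uroe \<phi> \<Longrightarrow> \<phi> mzero = 0"
  using pos_functional_mscale[OF _ uroe_mzero, of \<phi> 0]
  by (simp add: mscale_def mzero_def)

lemma pos_functional_nonneg:
  "pos_functional uroe \<phi> \<Longrightarrow> a \<in> uroe \<Longrightarrow> pos_op a \<Longrightarrow> \<phi> a \<in> \<real>\<^sub>\<ge>\<^sub>0"
  by (simp add: pos_functional_def complex_nonneg_Reals_iff)

lemma pos_op_shift:
  assumes s: "bounded_op s" "adj s = s" and k: "\<bar>k\<bar> \<le> 1"
  shows "pos_op (madd (mscale (complex_of_real (opnorm s)) mone) (mscale (complex_of_real k) s))"
proof -
  define r where "r = opnorm s"
  have r0: "r \<ge> 0" unfolding r_def by (rule opnorm_nonneg[OF s(1)])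
  have b1: "bounded_op (mscale (complex_of_real r) mone)" by (rule bounded_op_mscale(1)[OF bounded_op_mone])
  have b2: "bounded_op (mscale (complex_of_real k) s)" by (rule bounded_op_mscale(1)[OF s(1)])
  show ?thesis unfolding pos_op_def r_def[symmetric]
  proof (intro conjI bounded_op_madd(1)[OF b1 b2] ballI)
    fix v :: "'a \<Rightarrow> complex" assume v: "v \<in> l2"
    have sv: "mapply s v \<in> l2" by (rule bounded_op_l2[OF s(1) v])
    define z where "z = l2inner (mapply s v) v"
    have "Im z = 0" unfolding z_def by (rule l2inner_selfadjoint_real[OF s v])
    have "cmod z \<le> r * (l2norm v)\<^sup>2"
      using norm_l2inner_le[OF sv v] mult_right_mono[OF l2norm_mapply_le[OF s(1) v] l2norm_nonneg[of v]]
      unfolding z_def r_def by (simp add: power2_eq_square mult.assoc)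
    moreover have "\<bar>k * Re z\<bar> \<le> cmod z"
      using k abs_Re_le_cmod[of z] mult_right_mono[OF k abs_ge_zero[of "Re z"]] by (simp add: abs_mult)
    ultimately have "\<bar>k * Re z\<bar> \<le> r * (l2norm v)\<^sup>2" by linarith
    moreover have "l2inner (mapply (madd (mscale (complex_of_real r) mone) (mscale (complex_of_real k) s)) v) v
        = complex_of_real (r * (l2norm v)\<^sup>2) + complex_of_real k * z"
      unfolding z_def mapply_madd[OF b1 b2 v] mapply_mscale mapply_mone
      by (simp add: l2inner_add_left[OF l2_scale(1)[OF v] l2_scale(1)[OF sv] v] l2inner_scale_left l2inner_self)
    ultimately show "Im (l2inner (mapply (madd (mscale (complex_of_real r) mone) (mscale (complex_of_real k) s)) v) v) = 0"
      and "0 \<le> Re (l2inner (mapply (madd (mscale (complex_of_real r) mone) (mscale (complex_of_real k) s)) v) v)"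
      using \<open>Im z = 0\<close> by auto
  qed
qed

lemma pos_functional_selfadjoint:
  assumes \<phi>: "pos_functional uroe \<phi>" and s: "s \<in> uroe" "adj s = s"
  shows "Im (\<phi> s) = 0" and "\<bar>Re (\<phi> s)\<bar> \<le> opnorm s * Re (\<phi> mone)"
proof -
  have "\<phi> mone \<in> \<real>\<^sub>\<ge>\<^sub>0" by (rule pos_functional_nonneg[OF \<phi> uroe_mone pos_op_mone])
  moreover have shift: "complex_of_real (opnorm s) * \<phi> mone + complex_of_real k * \<phi> s \<in> \<real>\<^sub>\<ge>\<^sub>0"
    if "\<bar>k\<bar> \<le> 1" for k
    using pos_functional_nonneg[OF \<phi> uroe_madd[OF uroe_mscale[OF uroe_mone] uroe_mscale[OF s(1)]]
        pos_op_shift[OF uroe_bounded_op[OF s(1)] s(2) that]]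
    by (simp add: pos_functional_madd[OF \<phi>] pos_functional_mscale[OF \<phi>] uroe_mscale uroe_mone s(1))
  ultimately show "Im (\<phi> s) = 0" and "\<bar>Re (\<phi> s)\<bar> \<le> opnorm s * Re (\<phi> mone)"
    using shift[of 1] shift[of "-1"] by (auto simp: complex_nonneg_Reals_iff)
qed

lemma norm_pos_functional_le:
  assumes \<phi>: "pos_functional uroe \<phi>" and c: "c \<in> uroe"
  shows "cmod (\<phi> c) \<le> 2 * opnorm c * Re (\<phi> mone)"
proof -
  define s1 where "s1 = mscale (1/2) (madd c (adj c))"
  define s2 where "s2 = mscale (- \<i>/2) (msub c (adj c))"
  have cb: "bounded_op c" by (rule uroe_bounded_op[OF c])
  have u1: "s1 \<in> uroe" unfolding s1_def by (intro uroe_mscale uroe_madd c uroe_adj)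
  have u2: "s2 \<in> uroe" unfolding s2_def by (intro uroe_mscale uroe_msub c uroe_adj)
  have a1: "adj s1 = s1" unfolding s1_def by (simp add: adj_def mscale_def madd_def add.commute)
  have a2: "adj s2 = s2" unfolding s2_def by (auto simp: adj_def mscale_def msub_def algebra_simps)
  have "opnorm s1 \<le> cmod (1/2) * opnorm (madd c (adj c))"
    unfolding s1_def by (rule bounded_op_mscale(2)[OF bounded_op_madd(1)[OF cb bounded_op_adj(1)[OF cb]]])
  then have n1: "opnorm s1 \<le> opnorm c"
    using bounded_op_madd(2)[OF cb bounded_op_adj(1)[OF cb]] bounded_op_adj(2)[OF cb] by simp
  have "opnorm s2 \<le> cmod (- \<i>/2) * opnorm (msub c (adj c))"
    unfolding s2_def by (rule bounded_op_mscale(2)[OF bounded_op_msub(1)[OF cb bounded_op_adj(1)[OF cb]]])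
  then have n2: "opnorm s2 \<le> opnorm c"
    using bounded_op_msub(2)[OF cb bounded_op_adj(1)[OF cb]] bounded_op_adj(2)[OF cb] by (simp add: norm_divide)
  have "c = madd s1 (mscale \<i> s2)"
    unfolding s1_def s2_def by (auto simp: adj_def mscale_def msub_def madd_def algebra_simps)
  then have "\<phi> c = \<phi> s1 + \<i> * \<phi> s2"
    by (simp add: pos_functional_madd[OF \<phi>] pos_functional_mscale[OF \<phi>] u1 u2 uroe_mscale)
  then have "cmod (\<phi> c) \<le> \<bar>Re (\<phi> s1)\<bar> + \<bar>Re (\<phi> s2)\<bar>"
    using norm_triangle_ineq[of "\<phi> s1" "\<i> * \<phi> s2"] pos_functional_selfadjoint(1)[OF \<phi> u1 a1]
      pos_functional_selfadjoint(1)[OF \<phi> u2 a2]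
    by (simp add: norm_mult cmod_eq_Re)
  also have "\<dots> \<le> opnorm s1 * Re (\<phi> mone) + opnorm s2 * Re (\<phi> mone)"
    using pos_functional_selfadjoint(2)[OF \<phi> u1 a1] pos_functional_selfadjoint(2)[OF \<phi> u2 a2] by simp
  also have "\<dots> \<le> opnorm c * Re (\<phi> mone) + opnorm c * Re (\<phi> mone)"
    using pos_functional_nonneg[OF \<phi> uroe_mone pos_op_mone] n1 n2
    by (intro add_mono mult_right_mono) (auto simp: complex_nonneg_Reals_iff)
  finally show ?thesis by simp
qed

section \<open>Analytic elements\<close>

lemma sigma_diag: "sigma h t (diag d) = diag d"
proof -
  have "exp (\<i> * c) * z * exp (- \<i> * c) = z" for c z :: complex
    by (simp add: mult.commute mult.left_commute flip: exp_add)
  from this[of "of_real t * of_real (h _)"] show ?thesis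
    by (auto simp: sigma_def diag_def fun_eq_iff mult.assoc)
qed

lemma entire_op_mscale:
  assumes "c holomorphic_on UNIV" "bounded_op m"
  shows "entire_op (\<lambda>z. mscale (c z) m)"
  unfolding entire_op_def
proof
  fix z
  obtain c' where "(c has_field_derivative c') (at z)"
    using holomorphic_on_imp_differentiable_at[OF assms(1) open_UNIV]
    unfolding field_differentiable_def by blast
  then have "((\<lambda>w. (c w - c z) / (w - z) - c') \<longlongrightarrow> 0) (at z)"
    unfolding has_field_derivative_iff by (rule LIM_zero)
  then have lim: "((\<lambda>w. cmod ((c w - c z) / (w - z) - c') * opnorm m) \<longlongrightarrow> 0) (at z)"
    by (intro tendsto_mult_left_zero tendsto_norm_zero)
  have eq: "msub (mscale (1 / (w - z)) (msub (mscale (c w) m) (mscale (c z) m))) (mscale c' m)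
      = mscale ((c w - c z) / (w - z) - c') m" for w
    by (simp add: msub_def mscale_def divide_inverse algebra_simps)
  show "\<exists>D. bounded_op D \<and>
      ((\<lambda>w. opnorm (msub (mscale (1 / (w - z)) (msub (mscale (c w) m) (mscale (c z) m))) D)) \<longlongrightarrow> 0) (at z)"
  proof (intro exI conjI)
    show "bounded_op (mscale c' m)" by (rule bounded_op_mscale(1)[OF assms(2)])
    show "((\<lambda>w. opnorm (msub (mscale (1 / (w - z)) (msub (mscale (c w) m) (mscale (c z) m))) (mscale c' m)))
        \<longlongrightarrow> 0) (at z)"
      unfolding eq
      by (rule Lim_null_comparison[OF _ lim])
         (simp add: opnorm_nonneg bounded_op_mscale assms(2) always_eventually)
  qed
qed

lemma analytic_ext_diag:
  assumes "\<And>x. cmod (d x) \<le> 1"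
  shows "analytic_ext uroe h (diag d) (\<lambda>z. diag d)"
proof -
  have "entire_op (\<lambda>z. mscale 1 (diag d))"
    by (rule entire_op_mscale[OF holomorphic_on_const bounded_op_diag(1)[OF assms]])
  then show ?thesis
    unfolding analytic_ext_def using uroe_diag[OF assms] by (simp add: sigma_diag mscale_def)
qed

lemma analytic_ext_matrix_unit:
  fixes h :: "'x::metric_space \<Rightarrow> real" and x y :: 'x
  defines "c \<equiv> \<lambda>z. exp (\<i> * z * of_real (h y)) * exp (- \<i> * z * of_real (h x))"
  shows "analytic_ext uroe h (matrix_unit y x) (\<lambda>z. mscale (c z) (matrix_unit y x))"
  unfolding analytic_ext_def
proof (intro conjI allI)
  show "mscale (c z) (matrix_unit y x) \<in> uroe" for z by (rule uroe_mscale[OF uroe_matrix_unit])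
  show "entire_op (\<lambda>z. mscale (c z) (matrix_unit y x))"
    unfolding c_def by (intro entire_op_mscale holomorphic_intros bounded_op_matrix_unit)
  show "mscale (c (complex_of_real t)) (matrix_unit y x) = sigma h t (matrix_unit y x)" for t
    by (auto simp: c_def sigma_def mscale_def matrix_unit_def fun_eq_iff)
qed

lemma holomorphic_on_entry:
  assumes "entire_op F" "\<And>z. bounded_op (F z)"
  shows "(\<lambda>z. F z y x) holomorphic_on UNIV"
proof -
  have "((\<lambda>z. F z y x) has_field_derivative D y x) (at z)"
    if D: "bounded_op D" "((\<lambda>w. opnorm (msub (mscale (1 / (w - z)) (msub (F w) (F z))) D)) \<longlongrightarrow> 0) (at z)"
    for z D
  proof -
    define Q where "Q w = msub (mscale (1 / (w - z)) (msub (F w) (F z))) D" for w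
    have "cmod (Q w y x) \<le> opnorm (Q w)" for w
      unfolding Q_def by (intro norm_entry_le_opnorm bounded_op_msub bounded_op_mscale assms(2) D(1))
    then have "((\<lambda>w. Q w y x) \<longlongrightarrow> 0) (at z)"
      by (intro Lim_null_comparison[OF _ D(2)[folded Q_def]] always_eventually) simp
    moreover have "Q w y x = (F w y x - F z y x) / (w - z) - D y x" for w
      unfolding Q_def by (simp add: msub_def mscale_def)
    ultimately show ?thesis unfolding has_field_derivative_iff by (simp add: LIM_zero_iff)
  qed
  then show ?thesis
    using assms(1) unfolding entire_op_def holomorphic_on_def field_differentiable_def by blast
qed

lemma zero_islimpt_reals: "(0::complex) islimpt range complex_of_real"
  unfolding islimpt_approachable
proof (intro allI impI)
  fix \<epsilon> :: real assume "\<epsilon> > 0"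
  then show "\<exists>x'\<in>range complex_of_real. x' \<noteq> 0 \<and> dist x' 0 < \<epsilon>"
    by (intro bexI[of _ "complex_of_real (\<epsilon> / 2)"]) (auto simp del: of_real_divide)
qed

lemma analytic_ext_entry:
  assumes "analytic_ext uroe h b F"
  shows "F z y x = exp (\<i> * z * of_real (h y)) * b y x * exp (- \<i> * z * of_real (h x))"
proof -
  have E: "entire_op F" and U: "\<And>z. F z \<in> uroe" and T: "\<And>t. F (of_real t) = sigma h t b"
    using assms unfolding analytic_ext_def by auto
  define g where "g z = F z y x - exp (\<i> * z * of_real (h y)) * b y x * exp (- \<i> * z * of_real (h x))" for z
  have "g holomorphic_on UNIV"
    unfolding g_def by (intro holomorphic_intros holomorphic_on_entry[OF E uroe_bounded_op[OF U]])
  then have "g z = 0"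
    by (rule analytic_continuation[OF _ open_UNIV connected_UNIV subset_UNIV UNIV_I zero_islimpt_reals _ UNIV_I])
       (auto simp: g_def T sigma_def)
  then show ?thesis unfolding g_def by simp
qed

section \<open>The diagonal part of a KMS state\<close>

definition diagonal_part :: "('x mat \<Rightarrow> complex) \<Rightarrow> 'x mat \<Rightarrow> complex" where
  "diagonal_part \<phi> a = infsum (\<lambda>x. a x x * \<phi> (ematrix x)) UNIV"

lemma infsum_nonneg_Reals:
  fixes f :: "'a \<Rightarrow> complex"
  assumes "\<And>x. x \<in> A \<Longrightarrow> f x \<in> \<real>\<^sub>\<ge>\<^sub>0"
  shows "infsum f A \<in> \<real>\<^sub>\<ge>\<^sub>0"
proof (cases "f summable_on A")
  case True
  have "infsum (\<lambda>x. Im (f x)) A = 0"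
    by (rule infsum_0) (use assms in \<open>simp add: complex_nonneg_Reals_iff\<close>)
  then have "Im (infsum f A) = 0" by (simp add: infsum_Im[OF True])
  moreover have "Re (infsum f A) \<ge> 0"
    using infsum_Re[OF True] assms
    by (metis complex_nonneg_Reals_iff Infinite_Sum.infsum_nonneg)
  ultimately show ?thesis by (simp add: complex_nonneg_Reals_iff)
qed (simp add: infsum_not_exists)

lemma pos_functional_ematrix: "pos_functional uroe \<phi> \<Longrightarrow> \<phi> (ematrix x) \<in> \<real>\<^sub>\<ge>\<^sub>0"
  by (rule pos_functional_nonneg[OF _ uroe_ematrix pos_op_ematrix])

lemma pos_functional_diag_indicator:
  fixes \<phi> :: "'x::metric_space mat \<Rightarrow> complex"
  assumes \<phi>: "pos_functional uroe \<phi>" and S: "finite S"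
  shows "\<phi> (diag (indicator S)) = (\<Sum>x\<in>S. \<phi> (ematrix x))"
  using S
proof (induction S rule: finite_induct)
  case empty
  have "diag (indicator {}) = (mzero :: 'x mat)" by (simp add: diag_def mzero_def fun_eq_iff)
  then show ?case using pos_functional_mzero[OF \<phi>] by (simp only: sum.empty)
next
  case (insert x S)
  have "diag (indicator (insert x S)) = madd (ematrix x) (diag (indicator S))"
    using insert(2) by (auto simp: diag_def ematrix_def madd_def indicator_def fun_eq_iff)
  then show ?case
    using insert by (simp add: pos_functional_madd[OF \<phi>] uroe_ematrix uroe_diag norm_indicator_le_1)
qed

lemma sum_ematrix_le:
  fixes \<phi> :: "'x::metric_space mat \<Rightarrow> complex"
  assumes \<phi>: "pos_functional uroe \<phi>" and S: "finite S"
  shows "(\<Sum>x\<in>S. Re (\<phi> (ematrix x))) \<le> Re (\<phi> mone)"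
proof -
  have split: "mone = madd (diag (indicator S)) (diag (indicator (- S)))"
    by (auto simp: mone_def diag_def madd_def indicator_def fun_eq_iff)
  have "\<phi> mone = \<phi> (diag (indicator S)) + \<phi> (diag (indicator (- S)))"
    unfolding split by (intro pos_functional_madd[OF \<phi>] uroe_diag norm_indicator_le_1)
  moreover have "\<phi> (diag (indicator (- S))) \<in> \<real>\<^sub>\<ge>\<^sub>0"
    by (rule pos_functional_nonneg[OF \<phi> uroe_diag[OF norm_indicator_le_1] pos_op_diag_indicator])
  ultimately show ?thesis
    by (simp add: pos_functional_diag_indicator[OF \<phi> S] complex_nonneg_Reals_iff)
qed

lemma ematrix_summable:
  fixes \<phi> :: "'x::metric_space mat \<Rightarrow> complex"
  assumes \<phi>: "pos_functional uroe \<phi>"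
  shows "(\<lambda>x. Re (\<phi> (ematrix x))) summable_on UNIV"
proof (rule nonneg_bdd_above_summable_on)
  show "0 \<le> Re (\<phi> (ematrix x))" for x
    using pos_functional_ematrix[OF \<phi>] by (simp add: complex_nonneg_Reals_iff)
  show "bdd_above (sum (\<lambda>x. Re (\<phi> (ematrix x))) ` {F. F \<subseteq> UNIV \<and> finite F})"
    using sum_ematrix_le[OF \<phi>] by (auto intro!: bdd_aboveI[where M="Re (\<phi> mone)"])
qed

lemma norm_mult_ematrix:
  "pos_functional uroe \<phi> \<Longrightarrow> cmod (c * \<phi> (ematrix x)) = cmod c * Re (\<phi> (ematrix x))"
  by (simp add: norm_mult nonneg_Reals_cmod_eq_Re pos_functional_ematrix)

lemma diagonal_part_summable:
  fixes \<phi> :: "'x::metric_space mat \<Rightarrow> complex"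
  assumes \<phi>: "pos_functional uroe \<phi>" and a: "bounded_op a"
  shows "(\<lambda>x. a x x * \<phi> (ematrix x)) summable_on UNIV"
proof (rule abs_summable_summable, rule summable_on_comparison_test)
  show "(\<lambda>x. opnorm a * Re (\<phi> (ematrix x))) summable_on UNIV"
    by (rule summable_on_cmult_right[OF ematrix_summable[OF \<phi>]])
  show "norm (a x x * \<phi> (ematrix x)) \<le> opnorm a * Re (\<phi> (ematrix x))" for x
    using norm_entry_le_opnorm[OF a] pos_functional_ematrix[OF \<phi>, of x]
    by (simp add: norm_mult_ematrix[OF \<phi>] complex_nonneg_Reals_iff mult_right_mono)
qed auto

lemma tendsto_diagonal_part:
  assumes "pos_functional uroe \<phi>" "bounded_op a"
  shows "((\<lambda>S. \<Sum>x\<in>S. a x x * \<phi> (ematrix x)) \<longlongrightarrow> diagonal_part \<phi> a) (finite_subsets_at_top UNIV)"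
  using diagonal_part_summable[OF assms]
  unfolding summable_iff_has_sum_infsum has_sum_def diagonal_part_def .

lemma pos_functional_diagonal_part:
  fixes \<phi> :: "'x::metric_space mat \<Rightarrow> complex"
  assumes \<phi>: "pos_functional uroe \<phi>"
  shows "pos_functional uroe (diagonal_part \<phi>)"
  unfolding pos_functional_def lin_functional_def
proof (intro conjI ballI allI impI)
  fix a b :: "'x mat" assume "a \<in> uroe" "b \<in> uroe"
  then show "diagonal_part \<phi> (madd a b) = diagonal_part \<phi> a + diagonal_part \<phi> b"
    unfolding diagonal_part_def
    using infsum_add[OF diagonal_part_summable[OF \<phi>] diagonal_part_summable[OF \<phi>]]
    by (simp add: madd_def distrib_right uroe_bounded_op)
next
  fix c and a :: "'x mat"
  show "diagonal_part \<phi> (mscale c a) = c * diagonal_part \<phi> a"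
    unfolding diagonal_part_def by (simp add: mscale_def mult.assoc infsum_cmult_right')
next
  fix a :: "'x mat" assume "pos_op a"
  then have "diagonal_part \<phi> a \<in> \<real>\<^sub>\<ge>\<^sub>0"
    unfolding diagonal_part_def
    by (intro infsum_nonneg_Reals nonneg_Reals_mult_I pos_op_diag_entry pos_functional_ematrix[OF \<phi>])
  then show "Im (diagonal_part \<phi> a) = 0" "0 \<le> Re (diagonal_part \<phi> a)"
    by (simp_all add: complex_nonneg_Reals_iff)
qed

lemma kms_diag_commute:
  assumes "kms_condition uroe h \<beta> \<phi>" "c \<in> uroe" "\<And>x. cmod (d x) \<le> 1"
  shows "\<phi> (mult_diag c d) = \<phi> (diag_mult d c)"
  using assms(1)[unfolded kms_condition_def, rule_format,
      OF assms(2) uroe_diag[OF assms(3)] analytic_ext_diag[OF assms(3)]]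
  by (simp only: mmult_diag_right mmult_diag_left)

lemma kms_diag_mult_indicator:
  fixes \<phi> :: "'x::metric_space mat \<Rightarrow> complex"
  assumes \<phi>: "pos_functional uroe \<phi>" and K: "kms_condition uroe h \<beta> \<phi>" and a: "a \<in> uroe"
  shows "\<phi> (diag_mult (indicator {x}) a) = a x x * \<phi> (ematrix x)"
proof -
  have "diag_mult (indicator {x}) a \<in> uroe" by (rule uroe_diag_mult[OF a norm_indicator_le_1])
  from kms_diag_commute[OF K this norm_indicator_le_1]
  have "\<phi> (mult_diag (diag_mult (indicator {x}) a) (indicator {x}))
      = \<phi> (diag_mult (indicator {x}) (diag_mult (indicator {x}) a))" .
  also have "diag_mult (indicator {x}) (diag_mult (indicator {x}) a) = diag_mult (indicator {x}) a"
    by (simp add: diag_mult_def indicator_def fun_eq_iff)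
  moreover have "mult_diag (diag_mult (indicator {x}) a) (indicator {x}) = mscale (a x x) (ematrix x)"
    by (auto simp: mult_diag_def diag_mult_def mscale_def ematrix_def fun_eq_iff)
  ultimately show ?thesis by (simp add: pos_functional_mscale[OF \<phi> uroe_ematrix])
qed

lemma kms_diag_mult_indicator_finite:
  fixes \<phi> :: "'x::metric_space mat \<Rightarrow> complex"
  assumes \<phi>: "pos_functional uroe \<phi>" and K: "kms_condition uroe h \<beta> \<phi>" and a: "a \<in> uroe"
    and S: "finite S"
  shows "\<phi> (diag_mult (indicator S) a) = (\<Sum>x\<in>S. a x x * \<phi> (ematrix x))"
  using S
proof (induction S rule: finite_induct)
  case empty
  have "diag_mult (indicator {}) a = mzero" by (simp add: diag_mult_def mzero_def fun_eq_iff)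
  then show ?case using pos_functional_mzero[OF \<phi>] by (simp only: sum.empty)
next
  case (insert x S)
  have "diag_mult (indicator (insert x S)) a = madd (diag_mult (indicator {x}) a) (diag_mult (indicator S) a)"
    using insert(2) by (auto simp: diag_mult_def madd_def indicator_def fun_eq_iff)
  then show ?case
    using insert by (simp add: pos_functional_madd[OF \<phi>] uroe_diag_mult[OF a] norm_indicator_le_1
        kms_diag_mult_indicator[OF \<phi> K a])
qed

lemma kms_compress:
  fixes \<phi> :: "'x::metric_space mat \<Rightarrow> complex"
  assumes \<phi>: "pos_functional uroe \<phi>" and K: "kms_condition uroe h \<beta> \<phi>" and a: "a \<in> uroe"
    and S: "finite S"
  shows "\<phi> a - (\<Sum>x\<in>S. a x x * \<phi> (ematrix x)) = \<phi> (compress (- S) a)"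
proof -
  define p where "p = (indicator S :: 'x \<Rightarrow> complex)"
  define q where "q = (indicator (- S) :: 'x \<Rightarrow> complex)"
  have p: "\<And>x. cmod (p x) \<le> 1" and q: "\<And>x. cmod (q x) \<le> 1"
    unfolding p_def q_def by (rule norm_indicator_le_1)+
  have qa: "diag_mult q a \<in> uroe" by (rule uroe_diag_mult[OF a q])
  have "\<phi> (mult_diag (diag_mult q a) p) = \<phi> (diag_mult p (diag_mult q a))"
    by (rule kms_diag_commute[OF K qa p])
  also have "diag_mult p (diag_mult q a) = mzero"
    by (auto simp: diag_mult_def p_def q_def mzero_def indicator_def fun_eq_iff)
  finally have qap: "\<phi> (mult_diag (diag_mult q a) p) = 0" by (simp add: pos_functional_mzero[OF \<phi>])
  have dec: "madd (diag_mult p a) (madd (compress (- S) a) (mult_diag (diag_mult q a) p)) = a"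
    by (simp add: compress_def diag_mult_def mult_diag_def madd_def p_def q_def indicator_def fun_eq_iff)
  have "\<phi> (madd (diag_mult p a) (madd (compress (- S) a) (mult_diag (diag_mult q a) p)))
      = \<phi> (diag_mult p a) + (\<phi> (compress (- S) a) + \<phi> (mult_diag (diag_mult q a) p))"
    using uroe_diag_mult[OF a p] uroe_compress[OF a] uroe_mult_diag[OF qa p]
    by (simp add: pos_functional_madd[OF \<phi>] uroe_madd)
  then have "\<phi> a = \<phi> (diag_mult p a) + \<phi> (compress (- S) a)"
    unfolding dec qap by simp
  then show ?thesis unfolding p_def by (simp add: kms_diag_mult_indicator_finite[OF \<phi> K a S])
qed

lemma diff_diagonal_part_nonneg:
  fixes \<phi> :: "'x::metric_space mat \<Rightarrow> complex"
  assumes \<phi>: "pos_functional uroe \<phi>" and K: "kms_condition uroe h \<beta> \<phi>"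
    and a: "a \<in> uroe" and pos: "pos_op a"
  shows "\<phi> a - diagonal_part \<phi> a \<in> \<real>\<^sub>\<ge>\<^sub>0"
proof (rule Lim_in_closed_set[OF closed_nonneg_Reals_complex])
  let ?F = "finite_subsets_at_top (UNIV :: 'x set)"
  have fin: "\<forall>\<^sub>F S in ?F. finite S" by (rule eventually_finite_subsets_at_top_weakI) simp
  then show "\<forall>\<^sub>F S in ?F. \<phi> (compress (- S) a) \<in> \<real>\<^sub>\<ge>\<^sub>0"
    by eventually_elim (rule pos_functional_nonneg[OF \<phi> uroe_compress[OF a] pos_op_compress[OF pos]])
  have "((\<lambda>S. \<phi> a - (\<Sum>x\<in>S. a x x * \<phi> (ematrix x))) \<longlongrightarrow> \<phi> a - diagonal_part \<phi> a) ?F"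
    by (intro tendsto_diff tendsto_const tendsto_diagonal_part[OF \<phi> uroe_bounded_op[OF a]])
  then show "((\<lambda>S. \<phi> (compress (- S) a)) \<longlongrightarrow> \<phi> a - diagonal_part \<phi> a) ?F"
    by (rule Lim_transform_eventually) (use fin in \<open>auto elim: eventually_mono simp: kms_compress[OF \<phi> K a]\<close>)
qed simp

text \<open>This is \<open>\<phi>(e_yy) = exp(-\<beta>(h y - h x)) \<phi>(e_xx)\<close>, written in the shape in which the factors
  arise from the entries of an analytic extension at \<open>z = i \<beta>\<close>.\<close>
lemma kms_ematrix:
  fixes \<phi> :: "'x::metric_space mat \<Rightarrow> complex"
  assumes \<phi>: "pos_functional uroe \<phi>" and K: "kms_condition uroe h \<beta> \<phi>"
  shows "\<phi> (ematrix y) = exp (\<i> * (\<i> * of_real \<beta>) * of_real (h y))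
      * exp (- \<i> * (\<i> * of_real \<beta>) * of_real (h x)) * \<phi> (ematrix x)"
proof -
  define k where "k = exp (\<i> * (\<i> * of_real \<beta>) * of_real (h y)) * exp (- \<i> * (\<i> * of_real \<beta>) * of_real (h x))"
  have "\<phi> (mmult (matrix_unit x y) (mscale k (matrix_unit y x))) = \<phi> (mmult (matrix_unit y x) (matrix_unit x y))"
    using K[unfolded kms_condition_def, rule_format, OF uroe_matrix_unit uroe_matrix_unit analytic_ext_matrix_unit]
    unfolding k_def by simp
  moreover have "mmult (matrix_unit x y) (mscale k (matrix_unit y x)) = mscale k (ematrix x)"
    unfolding mmult_def
    by (intro ext, subst infsum_finite_support[of "{y}"]) (auto simp: matrix_unit_def mscale_def ematrix_def)
  moreover have "mmult (matrix_unit y x) (matrix_unit x y) = ematrix y"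
    unfolding mmult_def
    by (intro ext, subst infsum_finite_support[of "{x}"]) (auto simp: matrix_unit_def ematrix_def)
  ultimately show ?thesis by (simp add: pos_functional_mscale[OF \<phi> uroe_ematrix] k_def)
qed

lemma sum_norm_column_row_le:
  assumes "bounded_op a" "bounded_op b"
  shows "(\<Sum>x\<in>A. cmod (a x y) * cmod (b y x)) \<le> opnorm a * opnorm b"
proof -
  have "(\<Sum>x\<in>A. cmod (a x y) * cmod (b y x))
      \<le> L2_set (\<lambda>x. cmod (a x y)) A * L2_set (\<lambda>x. cmod (b y x)) A"
    using L2_set_mult_ineq[of "\<lambda>x. cmod (a x y)" "\<lambda>x. cmod (b y x)" A] by simp
  also have "\<dots> \<le> l2norm (\<lambda>x. a x y) * l2norm (\<lambda>x. b y x)"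
    by (intro mult_mono L2_set_le_l2norm column_l2 row_l2 assms l2norm_nonneg L2_set_nonneg)
  also have "\<dots> \<le> opnorm a * opnorm b"
    by (intro mult_mono column_l2 row_l2 assms opnorm_nonneg l2norm_nonneg)
  finally show ?thesis .
qed

lemma trace_product_summable:
  fixes \<phi> :: "'x::metric_space mat \<Rightarrow> complex"
  assumes \<phi>: "pos_functional uroe \<phi>" and a: "bounded_op a" and b: "bounded_op b"
  shows "(\<lambda>(x, y). a x y * b y x * \<phi> (ematrix y)) summable_on UNIV \<times> UNIV"
proof -
  define e where "e y = Re (\<phi> (ematrix y))" for y
  have e0: "e y \<ge> 0" for y
    using pos_functional_ematrix[OF \<phi>] unfolding e_def by (simp add: complex_nonneg_Reals_iff)
  have bound: "(\<Sum>(x, y)\<in>W. norm (a x y * b y x * \<phi> (ematrix y))) \<le> opnorm a * opnorm b * Re (\<phi> mone)"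
    if W: "finite W" for W
  proof -
    define A where "A = fst ` W"
    define B where "B = snd ` W"
    have A: "finite A" and B: "finite B" using W unfolding A_def B_def by auto
    have "(\<Sum>(x, y)\<in>W. norm (a x y * b y x * \<phi> (ematrix y)))
        \<le> (\<Sum>(x, y)\<in>A \<times> B. norm (a x y * b y x * \<phi> (ematrix y)))"
      by (rule sum_mono2) (use A B in \<open>auto simp: A_def B_def intro: rev_image_eqI\<close>)
    also have "\<dots> = (\<Sum>y\<in>B. e y * (\<Sum>x\<in>A. cmod (a x y) * cmod (b y x)))"
      unfolding sum.cartesian_product[symmetric] e_def
      by (subst sum.swap)
         (simp add: norm_mult nonneg_Reals_cmod_eq_Re[OF pos_functional_ematrix[OF \<phi>]] sum_distrib_left mult_ac)
    also have "\<dots> \<le> (\<Sum>y\<in>B. e y * (opnorm a * opnorm b))"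
      by (intro sum_mono mult_left_mono sum_norm_column_row_le a b e0)
    also have "\<dots> \<le> Re (\<phi> mone) * (opnorm a * opnorm b)"
      unfolding sum_distrib_right[symmetric] e_def
      by (intro mult_right_mono sum_ematrix_le[OF \<phi> B] mult_nonneg_nonneg opnorm_nonneg a b)
    finally show ?thesis by (simp add: mult_ac)
  qed
  have "(\<lambda>p. norm ((\<lambda>(x, y). a x y * b y x * \<phi> (ematrix y)) p)) summable_on UNIV \<times> UNIV"
    by (rule nonneg_bdd_above_summable_on)
       (use bound in \<open>auto simp: case_prod_unfold intro!: bdd_aboveI[where M="opnorm a * opnorm b * Re (\<phi> mone)"]\<close>)
  then show ?thesis by (rule abs_summable_summable)
qed

lemma kms_condition_diagonal_part:
  fixes \<phi> :: "'x::metric_space mat \<Rightarrow> complex"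
  assumes \<phi>: "pos_functional uroe \<phi>" and K: "kms_condition uroe h \<beta> \<phi>"
  shows "kms_condition uroe h \<beta> (diagonal_part \<phi>)"
  unfolding kms_condition_def
proof (intro ballI allI impI)
  fix a b :: "'x mat" and F assume a: "a \<in> uroe" and b: "b \<in> uroe" and F: "analytic_ext uroe h b F"
  define f where "f x y = a x y * b y x * \<phi> (ematrix y)" for x y
  have F_entry: "F (\<i> * of_real \<beta>) y x * \<phi> (ematrix x) = b y x * \<phi> (ematrix y)" for x y
    unfolding analytic_ext_entry[OF F, of "\<i> * of_real \<beta>" y x] kms_ematrix[OF \<phi> K, of y x]
    by (simp add: mult_ac)
  have "diagonal_part \<phi> (mmult a (F (\<i> * of_real \<beta>)))
      = infsum (\<lambda>x. infsum (\<lambda>y. a x y * F (\<i> * of_real \<beta>) y x * \<phi> (ematrix x)) UNIV) UNIV"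
    unfolding diagonal_part_def mmult_def by (simp add: infsum_cmult_left')
  also have "\<dots> = infsum (\<lambda>x. infsum (\<lambda>y. f x y) UNIV) UNIV"
    unfolding f_def by (simp add: mult.assoc F_entry)
  also have "\<dots> = infsum (\<lambda>y. infsum (\<lambda>x. f x y) UNIV) UNIV"
    using trace_product_summable[OF \<phi> uroe_bounded_op[OF a] uroe_bounded_op[OF b]]
    unfolding f_def by (intro infsum_swap_banach) simp
  also have "\<dots> = infsum (\<lambda>y. infsum (\<lambda>x. a x y * b y x) UNIV * \<phi> (ematrix y)) UNIV"
    unfolding f_def by (simp add: infsum_cmult_left')
  also have "\<dots> = diagonal_part \<phi> (mmult b a)"
    unfolding diagonal_part_def mmult_def by (simp add: mult.commute)
  finally show "diagonal_part \<phi> (mmult a (F (\<i> * of_real \<beta>))) = diagonal_part \<phi> (mmult b a)" .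
qed

lemma lin_functional_diff:
  assumes "lin_functional A \<phi>" "lin_functional A \<psi>"
  shows "lin_functional A (\<lambda>a. \<phi> a - \<psi> a)"
  using assms unfolding lin_functional_def by (simp add: algebra_simps)

lemma kms_condition_diff:
  assumes "kms_condition A h \<beta> \<phi>" "kms_condition A h \<beta> \<psi>"
  shows "kms_condition A h \<beta> (\<lambda>a. \<phi> a - \<psi> a)"
  using assms unfolding kms_condition_def by simp

lemma pos_functional_diff_diagonal_part:
  fixes \<phi> :: "'x::metric_space mat \<Rightarrow> complex"
  assumes \<phi>: "pos_functional uroe \<phi>" and K: "kms_condition uroe h \<beta> \<phi>"
  shows "pos_functional uroe (\<lambda>a. \<phi> a - diagonal_part \<phi> a)"
  using lin_functional_diff[of uroe \<phi> "diagonal_part \<phi>"] \<phi> pos_functional_diagonal_part[OF \<phi>]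
    diff_diagonal_part_nonneg[OF \<phi> K]
  unfolding pos_functional_def by (simp add: complex_nonneg_Reals_iff)

section \<open>Strong continuity of the diagonal part\<close>

lemma infsum_tail_small:
  fixes g :: "'a \<Rightarrow> real"
  assumes g: "g summable_on UNIV" and \<epsilon>: "\<epsilon> > 0"
  shows "\<exists>S. finite S \<and> infsum g (UNIV - S) < \<epsilon>"
proof -
  have "(sum g \<longlongrightarrow> infsum g UNIV) (finite_subsets_at_top UNIV)"
    using g by (simp add: summable_iff_has_sum_infsum has_sum_def)
  from tendstoD[OF this \<epsilon>] obtain S where S: "finite S" and "dist (sum g S) (infsum g UNIV) < \<epsilon>"
    unfolding eventually_finite_subsets_at_top by auto
  then have "infsum g UNIV - sum g S < \<epsilon>"
    unfolding dist_real_def abs_less_iff by linarith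
  then show ?thesis
    using infsum_Diff[OF g _ subset_UNIV, of S] S by auto
qed

lemma tendsto_infsum_dominated:
  fixes f :: "'b \<Rightarrow> 'a \<Rightarrow> 'c::banach"
  assumes g: "g summable_on UNIV"
    and dom: "\<forall>\<^sub>F b in F. \<forall>x. norm (f b x) \<le> g x"
    and lim: "\<And>x. ((\<lambda>b. f b x) \<longlongrightarrow> 0) F"
  shows "((\<lambda>b. infsum (f b) UNIV) \<longlongrightarrow> 0) F"
proof (rule tendstoI)
  fix \<epsilon> :: real assume \<epsilon>: "\<epsilon> > 0"
  obtain S where S: "finite S" and tail: "infsum g (UNIV - S) < \<epsilon> / 2"
    using infsum_tail_small[OF g, of "\<epsilon> / 2"] \<epsilon> by auto
  define \<eta> where "\<eta> = \<epsilon> / (2 * (real (card S) + 1))"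
  have \<eta>: "\<eta> > 0" using \<epsilon> by (simp add: \<eta>_def)
  have "\<forall>\<^sub>F b in F. \<forall>x\<in>S. norm (f b x) < \<eta>"
    using tendstoD[OF lim \<eta>] by (intro eventually_ball_finite[OF S]) simp
  then show "\<forall>\<^sub>F b in F. dist (infsum (f b) UNIV) 0 < \<epsilon>"
    using dom
  proof eventually_elim
    case (elim b)
    have nf: "(\<lambda>x. norm (f b x)) summable_on UNIV"
      by (rule summable_on_comparison_test[OF g]) (use elim in auto)
    have "norm (sum (f b) S) \<le> (\<Sum>x\<in>S. norm (f b x))" by (rule norm_sum)
    also have "\<dots> \<le> real (card S) * \<eta>"
      using elim(1) sum_bounded_above[of S "\<lambda>x. norm (f b x)" \<eta>] by (simp add: less_imp_le)
    also have "\<dots> < \<epsilon> / 2" using \<epsilon> unfolding \<eta>_def by (simp add: field_simps)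
    finally have head: "norm (sum (f b) S) < \<epsilon> / 2" .
    have nf': "(\<lambda>x. norm (f b x)) summable_on (UNIV - S)"
      by (rule summable_on_subset_banach[OF nf]) simp
    have "norm (infsum (f b) (UNIV - S)) \<le> infsum (\<lambda>x. norm (f b x)) (UNIV - S)"
      by (rule norm_infsum_bound[OF nf'])
    also have "\<dots> \<le> infsum g (UNIV - S)"
      by (rule infsum_mono[OF nf' summable_on_subset_banach[OF g]]) (use elim in auto)
    finally have rest: "norm (infsum (f b) (UNIV - S)) < \<epsilon> / 2" using tail by linarith
    have "infsum (f b) UNIV = sum (f b) S + infsum (f b) (UNIV - S)"
      using infsum_Diff[OF abs_summable_summable[OF nf] _ subset_UNIV, of S] S by simp
    then show ?case
      using head rest norm_triangle_ineq[of "sum (f b) S" "infsum (f b) (UNIV - S)"] by simp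
  qed
qed

lemma norm_diag_entry_diff_le:
  assumes "bounded_op a" "bounded_op b"
  shows "cmod (b x x - a x x) \<le> l2norm (vdiff (mapply b (indicator {x})) (mapply a (indicator {x})))"
  using norm_le_l2norm[OF l2_diff(1)[OF bounded_op_l2[OF assms(2) indicator_l2] bounded_op_l2[OF assms(1) indicator_l2]], of x]
  by (simp add: vdiff_def mapply_indicator)

lemma tendsto_diag_entry_diff:
  assumes "bounded_op a" "\<forall>\<^sub>F b in F. bounded_op b"
    and "((\<lambda>b. l2norm (vdiff (mapply b (indicator {x})) (mapply a (indicator {x})))) \<longlongrightarrow> 0) F"
  shows "((\<lambda>b. b x x - a x x) \<longlongrightarrow> 0) F"
  using assms(2) by (intro Lim_null_comparison[OF _ assms(3)]) (auto elim!: eventually_mono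
      intro: norm_diag_entry_diff_le[OF assms(1)])

lemma strongly_continuous_diagonal_part:
  fixes \<phi> :: "'x::metric_space mat \<Rightarrow> complex"
  assumes \<phi>: "pos_functional uroe \<phi>"
  shows "strongly_continuous uroe (diagonal_part \<phi>)"
  unfolding strongly_continuous_def
proof (intro allI ballI impI)
  fix R :: real and a :: "'x mat" and F :: "'x mat filter"
  assume a: "a \<in> uroe" and aR: "opnorm a \<le> R" and ev: "\<forall>\<^sub>F b in F. b \<in> uroe \<and> opnorm b \<le> R"
    and strong: "\<forall>v\<in>l2. ((\<lambda>b. l2norm (vdiff (mapply b v) (mapply a v))) \<longlongrightarrow> 0) F"
  have ab: "bounded_op a" by (rule uroe_bounded_op[OF a])
  define f where "f b x = (b x x - a x x) * \<phi> (ematrix x)" for b x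
  have "((\<lambda>b. infsum (f b) UNIV) \<longlongrightarrow> 0) F"
  proof (rule tendsto_infsum_dominated)
    show "(\<lambda>x. 2 * R * Re (\<phi> (ematrix x))) summable_on UNIV"
      by (rule summable_on_cmult_right[OF ematrix_summable[OF \<phi>]])
    show "\<forall>\<^sub>F b in F. \<forall>x. norm (f b x) \<le> 2 * R * Re (\<phi> (ematrix x))"
      using ev
    proof eventually_elim
      case (elim b)
      have "cmod (b x x - a x x) \<le> 2 * R" for x
        using norm_triangle_ineq4[of "b x x" "a x x"] norm_entry_le_opnorm[OF ab, of x x]
          norm_entry_le_opnorm[OF uroe_bounded_op[of b], of x x] elim aR by linarith
      moreover have "Re (\<phi> (ematrix x)) \<ge> 0" for x
        using pos_functional_ematrix[OF \<phi>, of x] by (simp add: complex_nonneg_Reals_iff)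
      ultimately show ?case
        unfolding f_def norm_mult_ematrix[OF \<phi>] by (simp add: mult_right_mono)
    qed
    show "((\<lambda>b. f b x) \<longlongrightarrow> 0) F" for x
    proof -
      have "\<forall>\<^sub>F b in F. bounded_op b" using ev by (auto elim: eventually_mono intro: uroe_bounded_op)
      from tendsto_diag_entry_diff[OF ab this strong[rule_format, OF indicator_l2[of x]]]
      show ?thesis unfolding f_def by (rule tendsto_mult_left_zero)
    qed
  qed
  moreover have "\<forall>\<^sub>F b in F. infsum (f b) UNIV = diagonal_part \<phi> b - diagonal_part \<phi> a"
    using ev
  proof eventually_elim
    case (elim b)
    then show ?case
      unfolding f_def diagonal_part_def left_diff_distrib
      using infsum_diff[OF diagonal_part_summable[OF \<phi> uroe_bounded_op] diagonal_part_summable[OF \<phi> ab]]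
      by simp
  qed
  ultimately have "((\<lambda>b. diagonal_part \<phi> b - diagonal_part \<phi> a) \<longlongrightarrow> 0) F"
    by (rule Lim_transform_eventually)
  then show "(diagonal_part \<phi> \<longlongrightarrow> diagonal_part \<phi> a) F"
    by (rule LIM_zero_cancel)
qed

section \<open>Compact operators\<close>

lemma ulf_finite_ball: "ulf TYPE('x::metric_space) \<Longrightarrow> finite (ball (x :: 'x) r)"
  unfolding ulf_def by (cases "r > 0") (auto simp: ball_empty)

lemma filterlim_balls_finite_subsets:
  assumes "ulf TYPE('x::metric_space)"
  shows "filterlim (\<lambda>n. ball (x0 :: 'x) (real n)) (finite_subsets_at_top UNIV) sequentially"
  unfolding filterlim_iff
proof (intro allI impI)
  fix P assume "eventually P (finite_subsets_at_top (UNIV :: 'x set))"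
  then obtain X where X: "finite X" and PX: "\<And>Y. finite Y \<Longrightarrow> X \<subseteq> Y \<Longrightarrow> P Y"
    unfolding eventually_finite_subsets_at_top by auto
  have inball: "\<forall>\<^sub>F n in sequentially. x \<in> ball x0 (real n)" for x
  proof -
    obtain N :: nat where "dist x0 x < real N" using reals_Archimedean2 by blast
    then show ?thesis unfolding eventually_sequentially mem_ball
      by (metis of_nat_le_iff order_less_le_trans)
  qed
  have "\<forall>\<^sub>F n in sequentially. \<forall>x\<in>X. x \<in> ball x0 (real n)"
    by (rule eventually_ball_finite[OF X]) (use inball in blast)
  then have "\<forall>\<^sub>F n in sequentially. X \<subseteq> ball x0 (real n)"
    by (rule eventually_mono) (simp add: subset_eq)
  then show "\<forall>\<^sub>F n in sequentially. P (ball x0 (real n))"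
    by (rule eventually_mono) (intro PX ulf_finite_ball[OF assms])
qed

lemma l2norm_indicator_tail:
  assumes "ulf TYPE('x::metric_space)" "w \<in> l2"
  shows "(\<lambda>n. l2norm (\<lambda>x. indicator (- ball (x0 :: 'x) (real n)) x * w x)) \<longlonglongrightarrow> 0"
proof -
  have "vdiff w (trunc T w) = (\<lambda>x. indicator (- T) x * w x)" for T
    by (auto simp: vdiff_def trunc_def indicator_def)
  then show ?thesis
    using filterlim_compose[OF tendsto_trunc[OF assms(2)] filterlim_balls_finite_subsets[OF assms(1)]]
    by simp
qed

lemma l2_tendsto_coordinate:
  assumes "\<And>k. f k \<in> l2" "w \<in> l2" "(\<lambda>k. l2norm (vdiff (f k) w)) \<longlonglongrightarrow> 0"
  shows "(\<lambda>k. f k x) \<longlonglongrightarrow> w x"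
proof (rule LIM_zero_cancel, rule Lim_null_comparison[OF _ assms(3)])
  show "\<forall>\<^sub>F k in sequentially. norm (f k x - w x) \<le> l2norm (vdiff (f k) w)"
    using norm_le_l2norm[OF l2_diff(1)[OF assms(1,2)], of _ x] by (simp add: vdiff_def)
qed

lemma opnorm_decseq_tendsto_zero:
  assumes bdd: "\<And>n. bounded_op (T n)" and dec: "\<And>n m. n \<le> m \<Longrightarrow> opnorm (T m) \<le> opnorm (T n)"
    and sub: "\<And>v. (\<And>n. v n \<in> l2 \<and> l2norm (v n) \<le> 1) \<Longrightarrow>
      \<exists>r. strict_mono r \<and> (\<lambda>k. l2norm (mapply (T (r k)) (v (r k)))) \<longlonglongrightarrow> 0"
  shows "(\<lambda>n. opnorm (T n)) \<longlonglongrightarrow> 0"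
proof (rule LIMSEQ_I)
  fix \<epsilon> :: real assume \<epsilon>: "\<epsilon> > 0"
  have "\<exists>n. opnorm (T n) < \<epsilon>"
  proof (rule ccontr)
    assume small: "\<nexists>n. opnorm (T n) < \<epsilon>"
    have ge: "\<epsilon> \<le> opnorm (T n)" for n using small by (simp add: not_less)
    have "\<epsilon> / 2 < opnorm (T n)" for n using ge[of n] \<epsilon> by linarith
    then have "\<exists>v. v \<in> l2 \<and> l2norm v \<le> 1 \<and> \<epsilon> / 2 < l2norm (mapply (T n) v)" for n
      using less_opnormD[OF bdd] by blast
    then obtain v where "\<forall>n. v n \<in> l2 \<and> l2norm (v n) \<le> 1 \<and> \<epsilon> / 2 < l2norm (mapply (T n) (v n))"
      by metis
    then have v: "\<And>n. v n \<in> l2 \<and> l2norm (v n) \<le> 1" and big: "\<And>n. \<epsilon> / 2 < l2norm (mapply (T n) (v n))"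
      by auto
    have "\<exists>r. strict_mono r \<and> (\<lambda>k. l2norm (mapply (T (r k)) (v (r k)))) \<longlonglongrightarrow> 0"
      by (rule sub) (rule v)
    then obtain r where "(\<lambda>k. l2norm (mapply (T (r k)) (v (r k)))) \<longlonglongrightarrow> 0" by blast
    then have "\<forall>\<^sub>F k in sequentially. l2norm (mapply (T (r k)) (v (r k))) < \<epsilon> / 2"
      using \<epsilon> by (intro order_tendstoD(2)) auto
    then obtain k where "l2norm (mapply (T (r k)) (v (r k))) < \<epsilon> / 2"
      unfolding eventually_sequentially by auto
    then show False using big[of "r k"] by linarith
  qed
  then obtain n where n: "opnorm (T n) < \<epsilon>" by blast
  have "norm (opnorm (T m) - 0) < \<epsilon>" if "m \<ge> n" for m
    using dec[OF that] n opnorm_nonneg[OF bdd, of m] by simp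
  then show "\<exists>no. \<forall>m\<ge>no. norm (opnorm (T m) - 0) < \<epsilon>" by blast
qed

lemma opnorm_indicator_tail_decreasing:
  assumes "bounded_op a" "n \<le> m"
  shows "opnorm (diag_mult (indicator (- ball x0 (real m))) a) \<le> opnorm (diag_mult (indicator (- ball x0 (real n))) a)"
    and "opnorm (mult_diag a (indicator (- ball x0 (real m)))) \<le> opnorm (mult_diag a (indicator (- ball x0 (real n))))"
proof -
  let ?q = "\<lambda>k. indicator (- ball x0 (real k)) :: _ \<Rightarrow> complex"
  have q: "?q m x * ?q n x = ?q m x" for x
    using subset_ball[of "real n" "real m" x0] assms(2) by (auto simp: indicator_def)
  have l: "diag_mult (?q m) a = diag_mult (?q m) (diag_mult (?q n) a)"
    by (simp add: diag_mult_def mult.assoc[symmetric] q)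
  show "opnorm (diag_mult (?q m) a) \<le> opnorm (diag_mult (?q n) a)"
    unfolding l
    by (rule bounded_op_diag_mult(2)[OF bounded_op_diag_mult(1)[OF assms(1) norm_indicator_le_1] norm_indicator_le_1])
  have r: "mult_diag a (?q m) = mult_diag (mult_diag a (?q n)) (?q m)"
    by (simp add: mult_diag_def mult.assoc mult.commute[of "?q n _"] q)
  show "opnorm (mult_diag a (?q m)) \<le> opnorm (mult_diag a (?q n))"
    unfolding r
    by (rule bounded_op_mult_diag(2)[OF bounded_op_mult_diag(1)[OF assms(1) norm_indicator_le_1] norm_indicator_le_1])
qed

lemma compact_op_tail_left:
  assumes U: "ulf TYPE('x::metric_space)" and C: "compact_op (a :: 'x mat)"
  shows "(\<lambda>n. opnorm (diag_mult (indicator (- ball x0 (real n))) a)) \<longlonglongrightarrow> 0"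
proof (rule opnorm_decseq_tendsto_zero)
  let ?q = "\<lambda>k. indicator (- ball x0 (real k)) :: 'x \<Rightarrow> complex"
  have a: "bounded_op a" using C by (simp add: compact_op_def)
  show "bounded_op (diag_mult (?q n) a)" for n by (rule bounded_op_diag_mult(1)[OF a norm_indicator_le_1])
  show "opnorm (diag_mult (?q m) a) \<le> opnorm (diag_mult (?q n) a)" if "n \<le> m" for n m
    by (rule opnorm_indicator_tail_decreasing(1)[OF a that])
  fix v :: "nat \<Rightarrow> 'x \<Rightarrow> complex" assume v: "\<And>n. v n \<in> l2 \<and> l2norm (v n) \<le> 1"
  obtain r w where r: "strict_mono r" and w: "w \<in> l2"
    and cv: "(\<lambda>k. l2norm (vdiff (mapply a (v (r k))) w)) \<longlonglongrightarrow> 0"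
    using C v unfolding compact_op_def by blast
  have tw: "(\<lambda>k. l2norm (\<lambda>x. ?q (r k) x * w x)) \<longlonglongrightarrow> 0"
    using filterlim_compose[OF l2norm_indicator_tail[OF U w] filterlim_subseq[OF r]] by simp
  have "l2norm (mapply (diag_mult (?q (r k)) a) (v (r k)))
      \<le> l2norm (vdiff (mapply a (v (r k))) w) + l2norm (\<lambda>x. ?q (r k) x * w x)" for k
  proof -
    define u where "u = mapply a (v (r k))"
    have d: "vdiff u w \<in> l2" unfolding u_def using bounded_op_l2[OF a] v w by (intro l2_diff(1)) auto
    have "(\<lambda>x. ?q (r k) x * u x) = (\<lambda>x. ?q (r k) x * vdiff u w x + ?q (r k) x * w x)"
      by (auto simp: vdiff_def algebra_simps)
    then have "l2norm (\<lambda>x. ?q (r k) x * u x) \<le> l2norm (\<lambda>x. ?q (r k) x * vdiff u w x) + l2norm (\<lambda>x. ?q (r k) x * w x)"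
      using l2_add(2)[OF l2_contraction(1)[OF d norm_indicator_le_1] l2_contraction(1)[OF w norm_indicator_le_1]]
      by simp
    also have "\<dots> \<le> l2norm (vdiff u w) + l2norm (\<lambda>x. ?q (r k) x * w x)"
      using l2_contraction(2)[OF d norm_indicator_le_1] by simp
    finally show ?thesis unfolding u_def mapply_diag_mult .
  qed
  then have "(\<lambda>k. l2norm (mapply (diag_mult (?q (r k)) a) (v (r k)))) \<longlonglongrightarrow> 0"
    by (intro Lim_null_comparison[OF _ tendsto_add_zero[OF cv tw]] always_eventually) (simp add: l2norm_nonneg)
  then show "\<exists>r. strict_mono r \<and> (\<lambda>k. l2norm (mapply (diag_mult (?q (r k)) a) (v (r k)))) \<longlonglongrightarrow> 0"
    using r by blast
qed

lemma norm_mapply_contraction_le: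
  assumes a: "bounded_op a" and v: "v \<in> l2" "l2norm v \<le> 1" and q: "\<And>y. cmod (q y) \<le> 1"
  shows "cmod (mapply a (\<lambda>y. q y * v y) x) \<le> l2norm (\<lambda>y. q y * a x y)"
proof -
  have "mapply a (\<lambda>y. q y * v y) x = infsum (\<lambda>y. (q y * a x y) * v y) UNIV"
    unfolding mapply_def by (simp add: mult_ac)
  also have "cmod \<dots> \<le> l2norm (\<lambda>y. q y * a x y) * l2norm v"
    by (intro norm_infsum_mult_le l2_contraction(1)[OF row_l2(1)[OF a] q] v)
  also have "\<dots> \<le> l2norm (\<lambda>y. q y * a x y)"
    using v(2) by (simp add: mult_left_le l2norm_nonneg)
  finally show ?thesis .
qed

lemma compact_op_tail_right:
  assumes U: "ulf TYPE('x::metric_space)" and C: "compact_op (a :: 'x mat)"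
  shows "(\<lambda>n. opnorm (mult_diag a (indicator (- ball x0 (real n))))) \<longlonglongrightarrow> 0"
proof (rule opnorm_decseq_tendsto_zero)
  let ?q = "\<lambda>k. indicator (- ball x0 (real k)) :: 'x \<Rightarrow> complex"
  have a: "bounded_op a" using C by (simp add: compact_op_def)
  show "bounded_op (mult_diag a (?q n))" for n by (rule bounded_op_mult_diag(1)[OF a norm_indicator_le_1])
  show "opnorm (mult_diag a (?q m)) \<le> opnorm (mult_diag a (?q n))" if "n \<le> m" for n m
    by (rule opnorm_indicator_tail_decreasing(2)[OF a that])
  fix v :: "nat \<Rightarrow> 'x \<Rightarrow> complex" assume v: "\<And>n. v n \<in> l2 \<and> l2norm (v n) \<le> 1"
  define u where "u n = (\<lambda>y. ?q n y * v n y)" for n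
  have u: "u n \<in> l2 \<and> l2norm (u n) \<le> 1" for n
    using l2_contraction[where d="indicator (- ball x0 (real n))", OF _ norm_indicator_le_1, of "v n"] v[of n]
    unfolding u_def by force
  obtain r w where r: "strict_mono r" and w: "w \<in> l2"
    and cv: "(\<lambda>k. l2norm (vdiff (mapply a (u (r k))) w)) \<longlonglongrightarrow> 0"
    using C u unfolding compact_op_def by blast
  have "w x = 0" for x
  proof -
    have "(\<lambda>k. mapply a (u (r k)) x) \<longlonglongrightarrow> w x"
      using u bounded_op_l2[OF a] by (intro l2_tendsto_coordinate[OF _ w cv]) blast
    moreover have "(\<lambda>k. mapply a (u (r k)) x) \<longlonglongrightarrow> 0"
    proof (rule Lim_null_comparison)
      show "(\<lambda>k. l2norm (\<lambda>y. ?q (r k) y * a x y)) \<longlonglongrightarrow> 0"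
        using filterlim_compose[OF l2norm_indicator_tail[OF U row_l2(1)[OF a]] filterlim_subseq[OF r]]
        by simp
      have "cmod (mapply a (u n) x) \<le> l2norm (\<lambda>y. ?q n y * a x y)" for n
        unfolding u_def using v[of n] by (intro norm_mapply_contraction_le a norm_indicator_le_1) auto
      then show "\<forall>\<^sub>F k in sequentially. norm (mapply a (u (r k)) x) \<le> l2norm (\<lambda>y. ?q (r k) y * a x y)"
        by simp
    qed
    ultimately show ?thesis by (rule LIMSEQ_unique)
  qed
  then have "(\<lambda>k. l2norm (mapply a (u (r k)))) \<longlonglongrightarrow> 0"
    using cv by (simp add: vdiff_def)
  then show "\<exists>r. strict_mono r \<and> (\<lambda>k. l2norm (mapply (mult_diag a (?q (r k))) (v (r k)))) \<longlonglongrightarrow> 0"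
    using r unfolding mapply_mult_diag u_def by blast
qed

lemma compact_op_uroe:
  assumes U: "ulf TYPE('x::metric_space)" and C: "compact_op (a :: 'x mat)"
  shows "a \<in> uroe"
proof (rule uroeI)
  show a: "bounded_op a" using C by (simp add: compact_op_def)
  fix \<epsilon> :: real assume \<epsilon>: "\<epsilon> > 0"
  obtain x0 :: 'x where True by blast
  let ?p = "\<lambda>n. indicator (ball x0 (real n)) :: 'x \<Rightarrow> complex"
  let ?q = "\<lambda>n. indicator (- ball x0 (real n)) :: 'x \<Rightarrow> complex"
  have "\<forall>\<^sub>F n in sequentially. opnorm (diag_mult (?q n) a) < \<epsilon> / 2 \<and> opnorm (mult_diag a (?q n)) < \<epsilon> / 2"
    using \<epsilon> by (intro eventually_conj order_tendstoD(2)[OF compact_op_tail_left[OF U C]]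
        order_tendstoD(2)[OF compact_op_tail_right[OF U C]]) auto
  then obtain n where n: "opnorm (diag_mult (?q n) a) < \<epsilon> / 2" "opnorm (mult_diag a (?q n)) < \<epsilon> / 2"
    unfolding eventually_sequentially by auto
  have "msub a (compress (ball x0 (real n)) a) = madd (diag_mult (?q n) a) (diag_mult (?p n) (mult_diag a (?q n)))"
    by (simp add: msub_def madd_def compress_def mult_diag_def diag_mult_def indicator_def fun_eq_iff)
  then have "opnorm (msub a (compress (ball x0 (real n)) a))
      \<le> opnorm (diag_mult (?q n) a) + opnorm (diag_mult (?p n) (mult_diag a (?q n)))"
    by (simp add: bounded_op_madd(2) bounded_op_diag_mult(1) bounded_op_mult_diag(1) a norm_indicator_le_1)
  also have "\<dots> \<le> opnorm (diag_mult (?q n) a) + opnorm (mult_diag a (?q n))"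
    using bounded_op_diag_mult(2)[OF bounded_op_mult_diag(1)[OF a norm_indicator_le_1] norm_indicator_le_1]
    by simp
  finally have close: "opnorm (msub a (compress (ball x0 (real n)) a)) < \<epsilon>" using n by simp
  have "finite_prop (compress (ball x0 (real n)) a)"
    unfolding finite_prop_def
  proof (intro exI[of _ "2 * real n"] allI impI)
    fix x y assume "compress (ball x0 (real n)) a x y \<noteq> 0"
    then have "dist x0 x < real n" "dist x0 y < real n"
      by (auto simp: compress_def mult_diag_def diag_mult_def indicator_def split: if_splits)
    then show "dist x y \<le> 2 * real n" using dist_triangle[of x y x0] by (simp add: dist_commute)
  qed
  then show "\<exists>b. bounded_op b \<and> finite_prop b \<and> opnorm (msub a b) < \<epsilon>"
    using close bounded_op_compress(1)[OF a] by blast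
qed

lemma compact_op_diagonal_part:
  fixes \<phi> :: "'x::metric_space mat \<Rightarrow> complex"
  assumes \<phi>: "pos_functional uroe \<phi>" and K: "kms_condition uroe h \<beta> \<phi>"
    and U: "ulf TYPE('x)" and C: "compact_op a"
  shows "\<phi> a = diagonal_part \<phi> a"
proof -
  obtain x0 :: 'x where True by blast
  have a: "a \<in> uroe" by (rule compact_op_uroe[OF U C])
  define S where "S n = ball x0 (real n)" for n
  define s where "s n = \<phi> a - (\<Sum>x\<in>S n. a x x * \<phi> (ematrix x))" for n
  have "s \<longlonglongrightarrow> \<phi> a - diagonal_part \<phi> a"
    unfolding s_def S_def
    by (intro tendsto_diff tendsto_const filterlim_compose[OF tendsto_diagonal_part[OF \<phi> uroe_bounded_op[OF a]]
        filterlim_balls_finite_subsets[OF U]])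
  moreover have "s \<longlonglongrightarrow> 0"
  proof (rule Lim_null_comparison)
    show "(\<lambda>n. 2 * opnorm (diag_mult (indicator (- S n)) a) * Re (\<phi> mone)) \<longlonglongrightarrow> 0"
      unfolding S_def by (intro tendsto_mult_left_zero tendsto_mult_right_zero compact_op_tail_left[OF U C])
    have "norm (s n) \<le> 2 * opnorm (diag_mult (indicator (- S n)) a) * Re (\<phi> mone)" for n
    proof -
      have "norm (s n) = norm (\<phi> (compress (- S n) a))"
        unfolding s_def S_def using kms_compress[OF \<phi> K a ulf_finite_ball[OF U]] by simp
      also have "\<dots> \<le> 2 * opnorm (compress (- S n) a) * Re (\<phi> mone)"
        by (rule norm_pos_functional_le[OF \<phi> uroe_compress[OF a]])
      also have "\<dots> \<le> 2 * opnorm (diag_mult (indicator (- S n)) a) * Re (\<phi> mone)"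
        using bounded_op_compress(2)[OF uroe_bounded_op[OF a]] pos_functional_nonneg[OF \<phi> uroe_mone pos_op_mone]
        by (intro mult_right_mono) (auto simp: complex_nonneg_Reals_iff)
      finally show ?thesis .
    qed
    then show "\<forall>\<^sub>F n in sequentially. norm (s n) \<le> 2 * opnorm (diag_mult (indicator (- S n)) a) * Re (\<phi> mone)"
      by simp
  qed
  ultimately show ?thesis using LIMSEQ_unique by fastforce
qed

theorem proposition4p1:
  fixes h :: "'x::metric_space \<Rightarrow> real" and \<beta> :: real and \<phi> :: "'x mat \<Rightarrow> complex"
  assumes "ulf TYPE('x)"
    and "coarse_fun h"
    and "is_state uroe \<phi>"
    and "kms_condition uroe h \<beta> \<phi>"
  defines "\<psi> \<equiv> (\<lambda>a. infsum (\<lambda>x. a x x * \<phi> (ematrix x)) UNIV)"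
  shows "(\<forall>a\<in>uroe. (\<lambda>x. a x x * \<phi> (ematrix x)) summable_on UNIV)
    \<and> pos_functional uroe \<psi>
    \<and> strongly_continuous uroe \<psi>
    \<and> kms_condition uroe h \<beta> \<psi>
    \<and> pos_functional uroe (\<lambda>a. \<phi> a - \<psi> a)
    \<and> kms_condition uroe h \<beta> (\<lambda>a. \<phi> a - \<psi> a)
    \<and> (\<forall>a. compact_op a \<longrightarrow> \<phi> a - \<psi> a = 0)"
proof -
  have \<phi>: "pos_functional uroe \<phi>" using assms(3) by (simp add: is_state_def)
  note K = assms(4)
  have \<psi>: "\<psi> = diagonal_part \<phi>" unfolding \<psi>_def diagonal_part_def ..
  show ?thesis
    unfolding \<psi>
    using diagonal_part_summable[OF \<phi> uroe_bounded_op]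
      pos_functional_diagonal_part[OF \<phi>]
      strongly_continuous_diagonal_part[OF \<phi>]
      kms_condition_diagonal_part[OF \<phi> K]
      pos_functional_diff_diagonal_part[OF \<phi> K]
      kms_condition_diff[OF K kms_condition_diagonal_part[OF \<phi> K]]
      compact_op_diagonal_part[OF \<phi> K assms(1)]
    by simp
qed

end
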